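(* Let $k\in\{3,4,5\}$ and let $k_0$ be an integer with $2\le k_0\le k-1$. There is no finite simple $2$-connected plane graph $G$ such that every vertex of $G$ has degree $k$ except for exactly one vertex, which lies on the boundary of the outer face and has degree $k_0$, and such that all internal faces of $G$ have the same length.
   Context: A plane graph is a planar graph together with a fixed embedding in the plane; its faces are the connected regions of the complement of the drawing, the unique unbounded one being the outer face and the others internal faces. The length of a face is the total length of the closed walk(s) bounding it (a cut-edge contributes twice). *)

theory Defs
  imports Main
begin

definition simple_graph :: "'v set \<Rightarrow> 'v set set \<Rightarrow> bool" where
  "simple_graph V E \<longleftrightarrow> finite V \<and>
     (\<forall>e\<in>E. \<exists>u v. e = {u, v} \<and> u \<noteq> v \<and> u \<in> V \<and> v \<in> V)"

definition nbrs :: "'v set set \<Rightarrow> 'v \<Rightarrow> 'v set" where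
  "nbrs E v = {u. {v, u} \<in> E}"

definition degree :: "'v set set \<Rightarrow> 'v \<Rightarrow> nat" where
  "degree E v = card (nbrs E v)"

definition connected_on :: "'v set \<Rightarrow> 'v set set \<Rightarrow> bool" where
  "connected_on S E \<longleftrightarrow>
     (\<forall>x\<in>S. \<forall>y\<in>S. (x, y) \<in> ({(a, b). a \<in> S \<and> b \<in> S \<and> {a, b} \<in> E})\<^sup>*)"

definition two_connected :: "'v set \<Rightarrow> 'v set set \<Rightarrow> bool" where
  "two_connected V E \<longleftrightarrow> card V \<ge> 3 \<and> connected_on V E \<and>
     (\<forall>x\<in>V. connected_on (V - {x}) E)"

text \<open>Combinatorial embedding (rotation system): for every vertex v, rot v
  cyclically permutes the neighbours of v (clockwise order around v).\<close>
definition rotation_system :: "'v set \<Rightarrow> 'v set set \<Rightarrow> ('v \<Rightarrow> 'v \<Rightarrow> 'v) \<Rightarrow> bool" where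
  "rotation_system V E rot \<longleftrightarrow>
     (\<forall>v\<in>V. rot v ` nbrs E v = nbrs E v \<and>
        (\<forall>u\<in>nbrs E v. nbrs E v = {(rot v ^^ n) u | n. True}))"

definition darts :: "'v set set \<Rightarrow> ('v \<times> 'v) set" where
  "darts E = {(u, v). {u, v} \<in> E}"

definition face_succ :: "('v \<Rightarrow> 'v \<Rightarrow> 'v) \<Rightarrow> 'v \<times> 'v \<Rightarrow> 'v \<times> 'v" where
  "face_succ rot d = (snd d, rot (snd d) (fst d))"

text \<open>A face is an orbit of the face-tracing permutation; its length is the number
  of darts in it (the length of its boundary walk; a cut edge contributes twice).\<close>
definition face_of :: "('v \<Rightarrow> 'v \<Rightarrow> 'v) \<Rightarrow> 'v \<times> 'v \<Rightarrow> ('v \<times> 'v) set" where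
  "face_of rot d = {(face_succ rot ^^ n) d | n. True}"

definition faces :: "'v set set \<Rightarrow> ('v \<Rightarrow> 'v \<Rightarrow> 'v) \<Rightarrow> ('v \<times> 'v) set set" where
  "faces E rot = face_of rot ` darts E"

definition face_length :: "('v \<times> 'v) set \<Rightarrow> nat" where
  "face_length f = card f"

definition vertex_on_face :: "'v \<Rightarrow> ('v \<times> 'v) set \<Rightarrow> bool" where
  "vertex_on_face x f \<longleftrightarrow> (\<exists>y. (x, y) \<in> f)"

text \<open>A connected graph with a rotation system is a plane embedding iff the
  embedding has genus 0, i.e. Euler's formula V - E + F = 2 holds.\<close>
definition plane_embedding :: "'v set \<Rightarrow> 'v set set \<Rightarrow> ('v \<Rightarrow> 'v \<Rightarrow> 'v) \<Rightarrow> bool" where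
  "plane_embedding V E rot \<longleftrightarrow> rotation_system V E rot \<and>
     int (card V) - int (card E) + int (card (faces E rot)) = 2"

definition plane_graph :: "'v set \<Rightarrow> 'v set set \<Rightarrow> ('v \<Rightarrow> 'v \<Rightarrow> 'v) \<Rightarrow> ('v \<times> 'v) set \<Rightarrow> bool" where
  "plane_graph V E rot outer \<longleftrightarrow> simple_graph V E \<and> plane_embedding V E rot \<and>
     outer \<in> faces E rot"

end

theory Submission
  imports Defs "HOL-Combinatorics.Transposition" Complex_Main
begin

(* The darts of the map carry three permutations: the rotation sigma around the
   vertices, the reversal theta of the edges and the face permutation phi = sigma o theta.
   Counting darts shows that internal faces of a common length L >= 3 force (k - 2) L < 2 k,
   so (k, L) is one of the spherical types (3,3), (3,4), (3,5), (4,3), (5,3). For each of them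
   a small action of the triangle group <s, t | s^k = t^2 = (s t)^L = 1> on N points defines an
   N-sheeted cover of the map, in which the rotation at the exceptional vertex w is twisted by
   s^(k+1-k0) so that the lifted rotation still closes up around w. The cover is connected
   through its lifted outer faces, and the twist makes one of them longer than the outer face,
   so there are fewer than N of them. Comparing cycle counts with the genus inequality
   z(alpha) + z(beta) + z(alpha beta) <= |S| + 2 c(alpha, beta), where z counts cycles and c the
   orbits of <alpha, beta>, applied to the cover then contradicts Euler's formula for the map. *)

section \<open>Cycles of permutations of finite sets\<close>

definition perm_on :: "('a \<Rightarrow> 'a) \<Rightarrow> 'a set \<Rightarrow> bool" where
  "perm_on f S \<longleftrightarrow> finite S \<and> bij_betw f S S"

definition orbit_of :: "('a \<Rightarrow> 'a) \<Rightarrow> 'a \<Rightarrow> 'a set" where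
  "orbit_of f x = {(f ^^ n) x | n. True}"

definition num_cycles :: "('a \<Rightarrow> 'a) \<Rightarrow> 'a set \<Rightarrow> nat" where
  "num_cycles f S = card (orbit_of f ` S)"

lemma perm_on_in: "perm_on f S \<Longrightarrow> x \<in> S \<Longrightarrow> f x \<in> S"
  unfolding perm_on_def bij_betw_def by auto

lemma perm_on_inj: "perm_on f S \<Longrightarrow> x \<in> S \<Longrightarrow> y \<in> S \<Longrightarrow> f x = f y \<Longrightarrow> x = y"
  unfolding perm_on_def bij_betw_def inj_on_def by auto

lemma perm_on_surj: "perm_on f S \<Longrightarrow> y \<in> S \<Longrightarrow> \<exists>x\<in>S. f x = y"
  unfolding perm_on_def bij_betw_def by (metis image_iff)

lemma perm_onI:
  assumes "finite S" "\<And>x. x \<in> S \<Longrightarrow> f x \<in> S" "\<And>x y. x \<in> S \<Longrightarrow> y \<in> S \<Longrightarrow> f x = f y \<Longrightarrow> x = y"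
  shows "perm_on f S"
  unfolding perm_on_def bij_betw_def
  by (metis assms endo_inj_surj image_subsetI inj_onI)

lemma perm_on_comp: "perm_on f S \<Longrightarrow> perm_on g S \<Longrightarrow> perm_on (f \<circ> g) S"
  unfolding perm_on_def using bij_betw_trans by blast

lemma perm_on_funpow: "perm_on f S \<Longrightarrow> perm_on (f ^^ n) S"
  by (induction n) (auto simp: perm_on_def intro: bij_betw_trans)

lemma perm_on_funpow_in: "perm_on f S \<Longrightarrow> x \<in> S \<Longrightarrow> (f ^^ n) x \<in> S"
  by (induction n) (auto simp: perm_on_in)

lemma perm_on_funpow_inj:
  "perm_on f S \<Longrightarrow> x \<in> S \<Longrightarrow> y \<in> S \<Longrightarrow> (f ^^ n) x = (f ^^ n) y \<Longrightarrow> x = y"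
  by (induction n) (auto dest: perm_on_inj intro: perm_on_funpow_in)

lemma funpow_cong_on:
  assumes "perm_on f S" "\<forall>y\<in>S. f y = g y" "x \<in> S"
  shows "(f ^^ n) x = (g ^^ n) x"
proof (induction n)
  case (Suc n)
  then show ?case using assms perm_on_funpow_in[OF assms(1,3), of n] by simp
qed simp

lemma funpow_mult_fixpoint: "(f ^^ p) x = x \<Longrightarrow> (f ^^ (p * n)) x = x"
  by (induction n) (auto simp: funpow_add)

lemma funpow_mod_period:
  assumes "(f ^^ p) x = x"
  shows "(f ^^ n) x = (f ^^ (n mod p)) x"
proof -
  have "(f ^^ n) x = (f ^^ (n mod p)) ((f ^^ (p * (n div p))) x)"
    by (metis funpow_add mod_div_mult_eq mult.commute o_apply)
  then show ?thesis using funpow_mult_fixpoint[OF assms] by simp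
qed

lemma orbit_of_self: "x \<in> orbit_of f x"
  unfolding orbit_of_def by (auto intro: exI[of _ 0])

lemma funpow_in_orbit_of: "(f ^^ n) x \<in> orbit_of f x"
  unfolding orbit_of_def by auto

lemma orbit_of_step: "y \<in> orbit_of f x \<Longrightarrow> f y \<in> orbit_of f x"
  unfolding orbit_of_def by clarsimp (metis funpow.simps(2) o_apply)

lemma orbit_of_trans: "y \<in> orbit_of f x \<Longrightarrow> z \<in> orbit_of f y \<Longrightarrow> z \<in> orbit_of f x"
proof -
  assume "y \<in> orbit_of f x" "z \<in> orbit_of f y"
  then obtain m n where "y = (f ^^ m) x" "z = (f ^^ n) y" unfolding orbit_of_def by auto
  then have "z = (f ^^ (n + m)) x" by (simp add: funpow_add)
  then show ?thesis unfolding orbit_of_def by auto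
qed

lemma orbit_of_subset:
  assumes "x \<in> A" "\<And>y. y \<in> A \<Longrightarrow> f y \<in> A"
  shows "orbit_of f x \<subseteq> A"
proof -
  have "(f ^^ n) x \<in> A" for n by (induction n) (use assms in auto)
  then show ?thesis unfolding orbit_of_def by auto
qed

lemma orbit_of_subset_perm_on: "perm_on f S \<Longrightarrow> x \<in> S \<Longrightarrow> orbit_of f x \<subseteq> S"
  using orbit_of_subset[of x S f] perm_on_in[of f S] by blast

lemma finite_orbit_of: "perm_on f S \<Longrightarrow> x \<in> S \<Longrightarrow> finite (orbit_of f x)"
  using orbit_of_subset_perm_on[of f S x] finite_subset unfolding perm_on_def by blast

lemma card_orbit_of_pos: "perm_on f S \<Longrightarrow> x \<in> S \<Longrightarrow> card (orbit_of f x) > 0"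
  using finite_orbit_of orbit_of_self by (fastforce simp: card_gt_0_iff)

lemma card_orbit_of_le_period:
  assumes "(f ^^ p) x = x" "p > 0"
  shows "card (orbit_of f x) \<le> p"
proof -
  have "orbit_of f x \<subseteq> (\<lambda>i. (f ^^ i) x) ` {..<p}"
  proof
    fix y assume "y \<in> orbit_of f x"
    then obtain n where "y = (f ^^ n) x" unfolding orbit_of_def by auto
    then have "y = (f ^^ (n mod p)) x" using funpow_mod_period[OF assms(1)] by simp
    then show "y \<in> (\<lambda>i. (f ^^ i) x) ` {..<p}" using assms(2) by auto
  qed
  then show ?thesis by (metis card_image_le card_lessThan card_mono finite_imageI finite_lessThan le_trans)
qed

lemma funpow_collision:
  assumes "finite A" "\<And>i. i \<le> card A \<Longrightarrow> (f ^^ i) x \<in> A"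
  obtains i j where "i < j" "j \<le> card A" "(f ^^ i) x = (f ^^ j) x"
proof -
  have "\<not> inj_on (\<lambda>i. (f ^^ i) x) {..card A}"
  proof
    assume "inj_on (\<lambda>i. (f ^^ i) x) {..card A}"
    then have "card ((\<lambda>i. (f ^^ i) x) ` {..card A}) = Suc (card A)" by (simp add: card_image)
    moreover have "card ((\<lambda>i. (f ^^ i) x) ` {..card A}) \<le> card A"
      using assms by (intro card_mono) auto
    ultimately show False by simp
  qed
  then obtain i j where "i \<le> card A" "j \<le> card A" "i \<noteq> j" "(f ^^ i) x = (f ^^ j) x"
    unfolding inj_on_def by auto
  then show thesis using that[of i j] that[of j i] by (cases "i < j") auto
qed

lemma perm_on_funpow_cancel:
  assumes "perm_on f S" "x \<in> S" "i < j" "(f ^^ i) x = (f ^^ j) x"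
  shows "(f ^^ (j - i)) x = x"
proof -
  have "(f ^^ i) ((f ^^ (j - i)) x) = (f ^^ (i + (j - i))) x" by (simp add: funpow_add)
  also have "\<dots> = (f ^^ i) x" using assms(3,4) by simp
  finally have "(f ^^ i) ((f ^^ (j - i)) x) = (f ^^ i) x" .
  then show ?thesis
    using perm_on_funpow_inj[OF assms(1) perm_on_funpow_in[OF assms(1,2)] assms(2)] by blast
qed

text \<open>Pigeonhole inside the orbit yields a period of at most its length, and no period is
  shorter than the orbit.\<close>
lemma funpow_card_orbit_of:
  assumes "perm_on f S" "x \<in> S"
  shows "(f ^^ card (orbit_of f x)) x = x"
proof -
  let ?c = "card (orbit_of f x)"
  obtain i j where ij: "i < j" "j \<le> ?c" "(f ^^ i) x = (f ^^ j) x"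
    using funpow_collision[of "orbit_of f x" f x] finite_orbit_of[OF assms] funpow_in_orbit_of
    by metis
  have period: "(f ^^ (j - i)) x = x" using perm_on_funpow_cancel[OF assms ij(1,3)] .
  then have "?c \<le> j - i" using card_orbit_of_le_period[OF period] ij(1) by simp
  then have "j - i = ?c" using ij by auto
  then show ?thesis using period by simp
qed

lemma orbit_of_sym:
  assumes "perm_on f S" "x \<in> S" "y \<in> orbit_of f x"
  shows "x \<in> orbit_of f y"
proof -
  obtain n where y: "y = (f ^^ n) x" using assms(3) unfolding orbit_of_def by auto
  let ?p = "card (orbit_of f x)"
  have "(f ^^ (?p * n)) x = x" by (rule funpow_mult_fixpoint[OF funpow_card_orbit_of[OF assms(1,2)]])
  moreover have "n \<le> ?p * n" using card_orbit_of_pos[OF assms(1,2)] by simp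
  moreover have "(f ^^ (?p * n - n)) y = (f ^^ ((?p * n - n) + n)) x" using y by (simp add: funpow_add)
  ultimately have "(f ^^ (?p * n - n)) y = x" by simp
  then show ?thesis using funpow_in_orbit_of[where n="?p * n - n"] by metis
qed

lemma orbit_of_eq:
  assumes "perm_on f S" "x \<in> S" "y \<in> orbit_of f x"
  shows "orbit_of f y = orbit_of f x"
proof
  show "orbit_of f y \<subseteq> orbit_of f x" using orbit_of_trans[OF assms(3)] by blast
  show "orbit_of f x \<subseteq> orbit_of f y" using orbit_of_trans[OF orbit_of_sym[OF assms]] by blast
qed

lemma orbit_of_fixpoint: "f x = x \<Longrightarrow> orbit_of f x = {x}"
proof -
  assume "f x = x"
  then have "(f ^^ n) x = x" for n by (induction n) auto
  then show ?thesis unfolding orbit_of_def by auto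
qed

lemma orbit_of_cong:
  assumes "perm_on f S" "\<forall>y\<in>S. f y = g y" "x \<in> S"
  shows "orbit_of f x = orbit_of g x"
  unfolding orbit_of_def using funpow_cong_on[OF assms] by simp

lemma num_cycles_cong:
  assumes "perm_on f S" "\<forall>y\<in>S. f y = g y"
  shows "num_cycles f S = num_cycles g S"
  unfolding num_cycles_def using orbit_of_cong[OF assms] by (simp cong: image_cong)

lemma card_orbits_eq_sum:
  assumes "perm_on f S" "A \<subseteq> S" "\<And>x. x \<in> A \<Longrightarrow> f x \<in> A"
  shows "real (card (orbit_of f ` A)) = (\<Sum>x\<in>A. 1 / real (card (orbit_of f x)))"
proof -
  have fin: "finite A" using assms(1,2) unfolding perm_on_def by (blast intro: finite_subset)
  have orbit_class: "{y\<in>A. orbit_of f y = orbit_of f x} = orbit_of f x" if x: "x \<in> A" for x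
  proof
    show "{y\<in>A. orbit_of f y = orbit_of f x} \<subseteq> orbit_of f x"
      using orbit_of_self[of _ f] by auto
    have "orbit_of f y = orbit_of f x" if "y \<in> orbit_of f x" for y
      using orbit_of_eq[OF assms(1) _ that] x assms(2) by blast
    then show "orbit_of f x \<subseteq> {y\<in>A. orbit_of f y = orbit_of f x}"
      using orbit_of_subset[of x A f, OF x assms(3)] by auto
  qed
  have "(\<Sum>x\<in>A. 1 / real (card (orbit_of f x))) =
     (\<Sum>Q\<in>orbit_of f ` A. \<Sum>x\<in>{x\<in>A. orbit_of f x = Q}. 1 / real (card (orbit_of f x)))"
    by (rule sum.image_gen[OF fin])
  also have "\<dots> = (\<Sum>Q\<in>orbit_of f ` A. 1)"
  proof (rule sum.cong[OF refl])
    fix Q assume "Q \<in> orbit_of f ` A"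
    then obtain x where x: "x \<in> A" "Q = orbit_of f x" by auto
    have "(\<Sum>y\<in>{y\<in>A. orbit_of f y = Q}. 1 / real (card (orbit_of f y))) = (\<Sum>y\<in>Q. 1 / real (card (orbit_of f y)))"
      using orbit_class[OF x(1)] x(2) by simp
    also have "\<dots> = (\<Sum>y\<in>Q. 1 / real (card Q))"
      using orbit_class[OF x(1)] x(2) by (intro sum.cong[OF refl]) (metis (mono_tags) mem_Collect_eq)
    also have "\<dots> = 1" using card_orbit_of_pos[OF assms(1)] x assms(2) by auto
    finally show "(\<Sum>y\<in>{y\<in>A. orbit_of f y = Q}. 1 / real (card (orbit_of f y))) = 1" .
  qed
  finally show ?thesis by simp
qed

lemma num_cycles_eq_sum:
  "perm_on f S \<Longrightarrow> real (num_cycles f S) = (\<Sum>x\<in>S. 1 / real (card (orbit_of f x)))"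
  unfolding num_cycles_def by (rule card_orbits_eq_sum[OF _ subset_refl perm_on_in])

lemma funpow_ne_self_below_card_orbit_of:
  assumes "Suc i < card (orbit_of f x)"
  shows "(f ^^ i) (f x) \<noteq> x"
  using card_orbit_of_le_period[where f=f and p="Suc i" and x=x] assms by (auto simp: funpow_swap1)

lemma card_orbit_of_le_of_semiconj:
  assumes "perm_on g T" "y \<in> T" "\<And>z. z \<in> T \<Longrightarrow> fst (g z) = f (fst z)"
  shows "card (orbit_of f (fst y)) \<le> card (orbit_of g y)"
proof -
  have "(f ^^ n) (fst y) = fst ((g ^^ n) y)" for n
    by (induction n) (simp_all add: assms(3)[OF perm_on_funpow_in[OF assms(1,2)]])
  then have "orbit_of f (fst y) = fst ` orbit_of g y" unfolding orbit_of_def by auto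
  then show ?thesis using card_image_le[OF finite_orbit_of[OF assms(1,2)]] by simp
qed

lemma card_orbits_Un:
  assumes "perm_on f S" "A \<subseteq> S" "B \<subseteq> S" "A \<inter> B = {}"
    "\<And>x. x \<in> A \<Longrightarrow> f x \<in> A" "\<And>x. x \<in> B \<Longrightarrow> f x \<in> B"
  shows "card (orbit_of f ` (A \<union> B)) = card (orbit_of f ` A) + card (orbit_of f ` B)"
proof -
  have "finite S" using assms(1) unfolding perm_on_def by simp
  then have fin: "finite A" "finite B" using assms(2,3) finite_subset by auto
  have "orbit_of f x \<noteq> orbit_of f y" if "x \<in> A" "y \<in> B" for x y
  proof
    assume "orbit_of f x = orbit_of f y"
    then have "y \<in> A" using orbit_of_subset[of x A f, OF that(1) assms(5)] orbit_of_self[of y f] by blast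
    then show False using that(2) assms(4) by blast
  qed
  then have "orbit_of f ` A \<inter> orbit_of f ` B = {}" by blast
  then show ?thesis using fin by (simp add: image_Un card_Un_disjoint)
qed

lemma card_orbits_lift_ge:
  assumes f: "perm_on f S" and g: "perm_on g (S \<times> P)" and "finite P" "A \<subseteq> S"
    and inv: "\<And>x. x \<in> A \<Longrightarrow> f x \<in> A" "\<And>y. y \<in> A \<times> P \<Longrightarrow> g y \<in> A \<times> P"
    and le: "\<And>y. y \<in> A \<times> P \<Longrightarrow> card (orbit_of g y) \<le> card (orbit_of f (fst y))"
  shows "card P * card (orbit_of f ` A) \<le> card (orbit_of g ` (A \<times> P))"
proof -
  have "real (card P * card (orbit_of f ` A)) = real (card P) * (\<Sum>x\<in>A. 1 / real (card (orbit_of f x)))"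
    using card_orbits_eq_sum[OF f assms(4) inv(1)] by simp
  also have "\<dots> = (\<Sum>x\<in>A. \<Sum>p\<in>P. 1 / real (card (orbit_of f x)))"
    by (simp add: sum_distrib_left)
  also have "\<dots> = (\<Sum>(x, p)\<in>A \<times> P. 1 / real (card (orbit_of f x)))"
    by (rule sum.cartesian_product)
  also have "\<dots> = (\<Sum>y\<in>A \<times> P. 1 / real (card (orbit_of f (fst y))))"
    by (simp add: case_prod_unfold)
  also have "\<dots> \<le> (\<Sum>y\<in>A \<times> P. 1 / real (card (orbit_of g y)))"
  proof (rule sum_mono)
    fix y assume y: "y \<in> A \<times> P"
    then have "y \<in> S \<times> P" using assms(4) by blast
    then show "1 / real (card (orbit_of f (fst y))) \<le> 1 / real (card (orbit_of g y))"
      using le[OF y] card_orbit_of_pos[OF g] by (simp add: frac_le)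
  qed
  also have "\<dots> = real (card (orbit_of g ` (A \<times> P)))"
    using card_orbits_eq_sum[OF g _ inv(2)] assms(4) by (simp add: Sigma_mono)
  finally show ?thesis by linarith
qed

lemma perm_on_map_prod: "perm_on f S \<Longrightarrow> perm_on g P \<Longrightarrow> perm_on (map_prod f g) (S \<times> P)"
  unfolding perm_on_def by (simp add: bij_betw_map_prod)

definition skew :: "('a \<Rightarrow> 'a) \<Rightarrow> 'a \<Rightarrow> ('b \<Rightarrow> 'b) \<Rightarrow> ('b \<Rightarrow> 'b) \<Rightarrow> 'a \<times> 'b \<Rightarrow> 'a \<times> 'b" where
  "skew f c a b x = (f (fst x), (if fst x = c then a else b) (snd x))"

lemma perm_on_skew:
  assumes "perm_on f S" "perm_on a P" "perm_on b P"
  shows "perm_on (skew f c a b) (S \<times> P)"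
proof (rule perm_onI)
  show "finite (S \<times> P)" using assms unfolding perm_on_def by simp
next
  fix x assume "x \<in> S \<times> P"
  then show "skew f c a b x \<in> S \<times> P"
    using perm_on_in[OF assms(1)] perm_on_in[OF assms(2)] perm_on_in[OF assms(3)]
    unfolding skew_def by (auto simp: mem_Times_iff)
next
  fix x y assume x: "x \<in> S \<times> P" and y: "y \<in> S \<times> P" and eq: "skew f c a b x = skew f c a b y"
  have "f (fst x) = f (fst y)" using eq unfolding skew_def by simp
  then have fst_eq: "fst x = fst y" using perm_on_inj[OF assms(1)] x y by (simp add: mem_Times_iff)
  have "(if fst x = c then a else b) (snd x) = (if fst x = c then a else b) (snd y)"
    using eq fst_eq unfolding skew_def by simp
  then have "snd x = snd y"
    using perm_on_inj[OF assms(2)] perm_on_inj[OF assms(3)] x y by (cases "fst x = c") (simp_all add: mem_Times_iff)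
  then show "x = y" using fst_eq by (simp add: prod_eq_iff)
qed

lemma fst_skew: "fst (skew f c a b x) = f (fst x)"
  unfolding skew_def by simp

lemma fst_funpow_skew: "fst ((skew f c a b ^^ n) x) = (f ^^ n) (fst x)"
  by (induction n) (simp_all add: fst_skew)

lemma funpow_skew_avoiding:
  assumes "\<forall>i<n. (f ^^ i) d \<noteq> c"
  shows "(skew f c a b ^^ n) (d, p) = ((f ^^ n) d, (b ^^ n) p)"
  using assms by (induction n) (auto simp: skew_def)

section \<open>Composing with a transposition\<close>

definition skip :: "('a \<Rightarrow> 'a) \<Rightarrow> 'a \<Rightarrow> 'a \<Rightarrow> 'a" where
  "skip f x y = (if f y = x then f x else f y)"

lemma perm_on_skip:
  assumes "perm_on f S" "x \<in> S"
  shows "perm_on (skip f x) (S - {x})"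
proof (rule perm_onI)
  show "finite (S - {x})" using assms unfolding perm_on_def by simp
next
  fix y assume y: "y \<in> S - {x}"
  have "f x \<noteq> x" if "f y = x" using that y perm_on_inj[OF assms(1), of y x] assms(2) by auto
  then show "skip f x y \<in> S - {x}" using perm_on_in[OF assms(1)] y assms(2) unfolding skip_def by auto
next
  fix y z assume y: "y \<in> S - {x}" and z: "z \<in> S - {x}" and eq: "skip f x y = skip f x z"
  have inj: "\<And>u v. u \<in> S \<Longrightarrow> v \<in> S \<Longrightarrow> f u = f v \<Longrightarrow> u = v" using perm_on_inj[OF assms(1)] by blast
  show "y = z"
    using eq y z inj[of x y] inj[of x z] inj[of y z] assms(2) unfolding skip_def by (auto split: if_splits)
qed

lemma orbit_of_skip_subset:
  assumes "perm_on f S" "x \<in> S" "y \<in> S" "y \<noteq> x"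
  shows "orbit_of (skip f x) y \<subseteq> orbit_of f y - {x}"
proof
  fix z assume "z \<in> orbit_of (skip f x) y"
  then obtain n where n: "z = (skip f x ^^ n) y" unfolding orbit_of_def by auto
  have "(skip f x ^^ n) y \<in> orbit_of f y"
  proof (induction n)
    case (Suc n)
    let ?u = "(skip f x ^^ n) y"
    have "f ?u \<in> orbit_of f y" "f (f ?u) \<in> orbit_of f y"
      using orbit_of_step[OF Suc] orbit_of_step[OF orbit_of_step[OF Suc]] by auto
    moreover have step: "(skip f x ^^ Suc n) y = (if f ?u = x then f (f ?u) else f ?u)"
      by (simp add: skip_def)
    ultimately show ?case unfolding step by (cases "f ?u = x") auto
  qed (simp add: orbit_of_self)
  moreover have "(skip f x ^^ n) y \<in> S - {x}"
    using perm_on_funpow_in[OF perm_on_skip[OF assms(1,2)]] assms(3,4) by simp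
  ultimately show "z \<in> orbit_of f y - {x}" using n by simp
qed

lemma funpow_in_orbit_of_skip:
  assumes "y \<noteq> x" "(f ^^ n) y \<noteq> x"
  shows "(f ^^ n) y \<in> orbit_of (skip f x) y"
  using assms(2)
proof (induction n rule: less_induct)
  case (less n)
  show ?case
  proof (cases n)
    case 0
    then show ?thesis by (simp add: orbit_of_self)
  next
    case (Suc i)
    show ?thesis
    proof (cases "(f ^^ i) y = x")
      case False
      then have "(f ^^ i) y \<in> orbit_of (skip f x) y" using less.IH Suc by simp
      then have "skip f x ((f ^^ i) y) \<in> orbit_of (skip f x) y" by (rule orbit_of_step)
      moreover have "skip f x ((f ^^ i) y) = (f ^^ n) y" using less.prems Suc unfolding skip_def by simp
      ultimately show ?thesis by simp
    next
      case True
      then obtain j where j: "i = Suc j" using assms(1) by (cases i) auto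
      then have "(f ^^ j) y \<noteq> x" using True less.prems Suc by auto
      then have "(f ^^ j) y \<in> orbit_of (skip f x) y" using less.IH Suc j by simp
      then have "skip f x ((f ^^ j) y) \<in> orbit_of (skip f x) y" by (rule orbit_of_step)
      moreover have "skip f x ((f ^^ j) y) = (f ^^ n) y" using True Suc j unfolding skip_def by simp
      ultimately show ?thesis by simp
    qed
  qed
qed

lemma orbit_of_skip:
  assumes "perm_on f S" "x \<in> S" "y \<in> S" "y \<noteq> x"
  shows "orbit_of (skip f x) y = orbit_of f y - {x}"
proof
  show "orbit_of (skip f x) y \<subseteq> orbit_of f y - {x}" by (rule orbit_of_skip_subset[OF assms])
  show "orbit_of f y - {x} \<subseteq> orbit_of (skip f x) y"
    using funpow_in_orbit_of_skip[OF assms(4)] unfolding orbit_of_def[of f] by blast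
qed

lemma num_cycles_skip:
  assumes "perm_on f S" "x \<in> S"
  shows "num_cycles f S = num_cycles (skip f x) (S - {x}) + (if f x = x then 1 else 0)"
proof -
  have "orbit_of (skip f x) ` (S - {x}) = (\<lambda>y. orbit_of f y - {x}) ` (S - {x})"
    using orbit_of_skip[OF assms] by (intro image_cong) auto
  then have "orbit_of (skip f x) ` (S - {x}) = (\<lambda>Q. Q - {x}) ` (orbit_of f ` (S - {x}))"
    by (simp add: image_image)
  moreover have "inj_on (\<lambda>Q. Q - {x}) (orbit_of f ` (S - {x}))"
  proof (rule inj_onI)
    fix Q1 Q2 assume "Q1 \<in> orbit_of f ` (S - {x})" "Q2 \<in> orbit_of f ` (S - {x})" "Q1 - {x} = Q2 - {x}"
    then obtain y1 y2 where y: "y1 \<in> S - {x}" "y2 \<in> S - {x}" "Q1 = orbit_of f y1" "Q2 = orbit_of f y2"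
      "y1 \<in> orbit_of f y2"
      using orbit_of_self[of _ f] by auto
    then show "Q1 = Q2" using orbit_of_eq[OF assms(1)] by blast
  qed
  ultimately have skipped: "num_cycles (skip f x) (S - {x}) = card (orbit_of f ` (S - {x}))"
    unfolding num_cycles_def by (simp add: card_image)
  have all: "orbit_of f ` S = insert (orbit_of f x) (orbit_of f ` (S - {x}))" using assms(2) by blast
  show ?thesis
  proof (cases "f x = x")
    case True
    have "orbit_of f x \<notin> orbit_of f ` (S - {x})"
    proof
      assume "orbit_of f x \<in> orbit_of f ` (S - {x})"
      then obtain y where "y \<in> S - {x}" "orbit_of f x = orbit_of f y" by auto
      then show False using orbit_of_fixpoint[of f x, OF True] orbit_of_self[of y f] by auto
    qed
    then show ?thesis
      using True skipped all assms unfolding num_cycles_def perm_on_def by simp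
  next
    case False
    have "f x \<in> S - {x}" using False perm_on_in[OF assms] by simp
    moreover have "orbit_of f (f x) = orbit_of f x"
      by (rule orbit_of_eq[OF assms orbit_of_step[OF orbit_of_self]])
    ultimately have "orbit_of f ` S = orbit_of f ` (S - {x})" using all by (metis image_eqI insert_absorb)
    then show ?thesis using False skipped unfolding num_cycles_def by simp
  qed
qed

lemma perm_on_comp_transpose:
  assumes "perm_on f S" "a \<in> S" "b \<in> S"
  shows "perm_on (f \<circ> transpose a b) S"
proof (rule perm_onI)
  show "finite S" using assms unfolding perm_on_def by simp
next
  fix x assume "x \<in> S"
  then show "(f \<circ> transpose a b) x \<in> S" using assms perm_on_in[OF assms(1)] by (auto simp: transpose_def)
next
  fix x y assume "x \<in> S" "y \<in> S" "(f \<circ> transpose a b) x = (f \<circ> transpose a b) y"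
  then have "transpose a b x = transpose a b y"
    using perm_on_inj[OF assms(1)] assms by (auto simp: transpose_def split: if_splits)
  then show "x = y" by (rule transpose_eq_imp_eq)
qed

lemma skip_comp_transpose_fixed:
  assumes "perm_on f S" "a \<in> S" "b \<in> S" "a \<noteq> b" "f b = b" "y \<in> S - {b}"
  shows "skip (f \<circ> transpose a b) b y = skip f b y"
proof -
  have "f z \<noteq> b" if "z \<in> S - {b}" for z
    using that perm_on_inj[OF assms(1), of z b] assms(3,5) by auto
  then show ?thesis using assms(2,4,5,6) by (cases "y = a") (simp_all add: skip_def)
qed

lemma skip_comp_transpose_pred:
  assumes "perm_on f S" "a \<in> S" "b \<in> S" "a \<noteq> b" "f a = b" "y \<in> S - {b}"
  shows "skip (f \<circ> transpose a b) b y = skip f b y"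
proof -
  have "f z \<noteq> b" if "z \<in> S - {a}" for z
    using that perm_on_inj[OF assms(1), of z a] assms(2,5) by auto
  then show ?thesis using assms(2,3,4,5,6) by (cases "y = a") (simp_all add: skip_def)
qed

lemma skip_comp_transpose_other:
  assumes "perm_on f S" "a \<in> S" "b \<in> S" "a \<noteq> b" "f c = b" "c \<in> S" "c \<noteq> a" "c \<noteq> b"
    "y \<in> S - {b}"
  shows "skip (f \<circ> transpose a b) b y = (skip f b \<circ> transpose a c) y"
proof -
  have "f z \<noteq> b" if "z \<in> S - {c}" for z
    using that perm_on_inj[OF assms(1), of z c] assms(5,6) by auto
  then show ?thesis using assms(2-9) by (cases "y = a"; cases "y = c") (simp_all add: skip_def)
qed

lemma orbit_of_step_iff:
  assumes "perm_on f S" "a \<in> S" "c \<in> S"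
  shows "f c \<in> orbit_of f a \<longleftrightarrow> c \<in> orbit_of f a"
proof
  assume fc: "f c \<in> orbit_of f a"
  have "f c \<in> orbit_of f c" by (rule orbit_of_step[OF orbit_of_self])
  then have "c \<in> orbit_of f (f c)" by (rule orbit_of_sym[OF assms(1,3)])
  then show "c \<in> orbit_of f a" using orbit_of_eq[OF assms(1,2) fc] by simp
qed (rule orbit_of_step)

lemma num_cycles_comp_transpose_adjacent:
  assumes f: "perm_on f S" and ab: "a \<in> S" "b \<in> S" "a \<noteq> b" and adjacent: "f b = b \<or> f a = b"
  shows "int (num_cycles (f \<circ> transpose a b) S) =
           int (num_cycles f S) + (if b \<in> orbit_of f a then 1 else -1)"
proof -
  let ?g = "f \<circ> transpose a b"
  have pg: "perm_on ?g S" by (rule perm_on_comp_transpose[OF f ab(1,2)])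
  have fa_fb: "f a \<noteq> f b" using perm_on_inj[OF f ab(1,2)] ab(3) by blast
  have "num_cycles (skip ?g b) (S - {b}) = num_cycles (skip f b) (S - {b})"
    using skip_comp_transpose_fixed[OF f ab] skip_comp_transpose_pred[OF f ab] adjacent
    by (intro num_cycles_cong[OF perm_on_skip[OF pg ab(2)]]) blast
  moreover have "b \<in> orbit_of f a \<longleftrightarrow> f a = b"
    using orbit_of_sym[OF f ab(1)] orbit_of_fixpoint[of f b] orbit_of_step[OF orbit_of_self[of a f]]
      adjacent ab(3) by auto
  ultimately show ?thesis
    using num_cycles_skip[OF f ab(2)] num_cycles_skip[OF pg ab(2)] fa_fb adjacent by auto
qed

text \<open>Composing with a transposition splits one cycle or merges two. The induction removes b
  from both permutations.\<close>
lemma num_cycles_comp_transpose: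
  assumes "perm_on f S" "a \<in> S" "b \<in> S" "a \<noteq> b"
  shows "int (num_cycles (f \<circ> transpose a b) S) =
           int (num_cycles f S) + (if b \<in> orbit_of f a then 1 else -1)"
  using assms
proof (induction "card S" arbitrary: S f a b rule: less_induct)
  case less
  obtain c where c: "c \<in> S" "f c = b" using perm_on_surj[OF less.prems(1,3)] by blast
  show ?case
  proof (cases "f b = b \<or> f a = b")
    case True
    then show ?thesis by (rule num_cycles_comp_transpose_adjacent[OF less.prems])
  next
    case False
    then have c_ne: "c \<noteq> a" "c \<noteq> b" using c by auto
    let ?g = "f \<circ> transpose a b"
    have pg: "perm_on ?g S" by (rule perm_on_comp_transpose[OF less.prems(1-3)])
    have card_less: "card (S - {b}) < card S"
      using less.prems(1) card_Diff1_less[OF _ less.prems(3)] unfolding perm_on_def by simp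
    have IH: "int (num_cycles (skip f b \<circ> transpose a c) (S - {b})) =
        int (num_cycles (skip f b) (S - {b})) + (if c \<in> orbit_of (skip f b) a then 1 else -1)"
      using less.hyps[OF card_less perm_on_skip[OF less.prems(1,3)]] c c_ne less.prems(2,4) by simp
    have "c \<in> orbit_of (skip f b) a \<longleftrightarrow> b \<in> orbit_of f a"
      using orbit_of_skip[OF less.prems(1,3,2)] orbit_of_step_iff[OF less.prems(1,2) c(1)] c(2)
        less.prems(4) c_ne by simp
    moreover have "num_cycles (skip ?g b) (S - {b}) = num_cycles (skip f b \<circ> transpose a c) (S - {b})"
      using skip_comp_transpose_other[OF less.prems c(2) c(1) c_ne]
      by (intro num_cycles_cong[OF perm_on_skip[OF pg less.prems(3)]]) blast
    ultimately show ?thesis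
      using num_cycles_skip[OF less.prems(1,3)] num_cycles_skip[OF pg less.prems(3)] IH False c(2)
      by simp
  qed
qed

section \<open>The genus inequality for pairs of permutations\<close>

definition joint_reach :: "('a \<Rightarrow> 'a) \<Rightarrow> ('a \<Rightarrow> 'a) \<Rightarrow> 'a set \<Rightarrow> ('a \<times> 'a) set" where
  "joint_reach f g S = {(x, y). x \<in> S \<and> (y = f x \<or> y = g x)}\<^sup>*"

definition num_joint_orbits :: "('a \<Rightarrow> 'a) \<Rightarrow> ('a \<Rightarrow> 'a) \<Rightarrow> 'a set \<Rightarrow> nat" where
  "num_joint_orbits f g S = card ((\<lambda>x. joint_reach f g S `` {x}) ` S)"

lemma joint_reach_refl: "(x, x) \<in> joint_reach f g S"
  unfolding joint_reach_def by simp

lemma joint_reach_trans: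
  "(x, y) \<in> joint_reach f g S \<Longrightarrow> (y, z) \<in> joint_reach f g S \<Longrightarrow> (x, z) \<in> joint_reach f g S"
  unfolding joint_reach_def by (rule rtrancl_trans)

lemma joint_reach_left: "x \<in> S \<Longrightarrow> (x, f x) \<in> joint_reach f g S"
  unfolding joint_reach_def by (rule r_into_rtrancl) simp

lemma joint_reach_right: "x \<in> S \<Longrightarrow> (x, g x) \<in> joint_reach f g S"
  unfolding joint_reach_def by (rule r_into_rtrancl) simp

lemma joint_reach_commute: "joint_reach f g S = joint_reach g f S"
  unfolding joint_reach_def by (metis (no_types, lifting) disj_commute)

lemma joint_reach_mono:
  assumes "\<And>x. x \<in> S \<Longrightarrow> (x, f x) \<in> joint_reach f' g' S \<and> (x, g x) \<in> joint_reach f' g' S"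
  shows "joint_reach f g S \<subseteq> joint_reach f' g' S"
proof -
  have "{(x, y). x \<in> S \<and> (y = f x \<or> y = g x)} \<subseteq> joint_reach f' g' S" using assms by auto
  then show ?thesis unfolding joint_reach_def[of f g S]
    by (rule rtrancl_subset_rtrancl[of _ "{(x, y). x \<in> S \<and> (y = f' x \<or> y = g' x)}", folded joint_reach_def])
qed

lemma joint_reach_closed:
  assumes "perm_on f S" "perm_on g S" "(x, y) \<in> joint_reach f g S" "x \<in> S"
  shows "y \<in> S"
  using assms(3,4) unfolding joint_reach_def
proof (induction rule: rtrancl_induct)
  case (step y z)
  then show ?case using perm_on_in[OF assms(1)] perm_on_in[OF assms(2)] by auto
qed

lemma joint_reach_orbit_of_left:
  assumes "perm_on f S" "x \<in> S" "y \<in> orbit_of f x"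
  shows "(x, y) \<in> joint_reach f g S"
proof -
  have "(x, (f ^^ n) x) \<in> joint_reach f g S" for n
  proof (induction n)
    case (Suc n)
    have "((f ^^ n) x, f ((f ^^ n) x)) \<in> joint_reach f g S"
      by (rule joint_reach_left[OF perm_on_funpow_in[OF assms(1,2)]])
    then show ?case using joint_reach_trans[OF Suc] by simp
  qed (simp add: joint_reach_refl)
  then show ?thesis using assms(3) unfolding orbit_of_def by blast
qed

lemma joint_reach_orbit_of_right:
  "perm_on g S \<Longrightarrow> x \<in> S \<Longrightarrow> y \<in> orbit_of g x \<Longrightarrow> (x, y) \<in> joint_reach f g S"
  unfolding joint_reach_commute[of f g S] by (rule joint_reach_orbit_of_left)

lemma joint_reach_orbit_of_comp:
  assumes "perm_on f S" "perm_on g S" "x \<in> S" "y \<in> orbit_of (f \<circ> g) x"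
  shows "(x, y) \<in> joint_reach f g S"
proof -
  have "(x, ((f \<circ> g) ^^ n) x) \<in> joint_reach f g S" for n
  proof (induction n)
    case (Suc n)
    let ?u = "((f \<circ> g) ^^ n) x"
    have u: "?u \<in> S" by (rule perm_on_funpow_in[OF perm_on_comp[OF assms(1,2)] assms(3)])
    have "(x, g ?u) \<in> joint_reach f g S" by (rule joint_reach_trans[OF Suc joint_reach_right[OF u]])
    then have "(x, f (g ?u)) \<in> joint_reach f g S"
      by (rule joint_reach_trans[OF _ joint_reach_left[OF perm_on_in[OF assms(2) u]]])
    then show ?case by (simp add: comp_def)
  qed (simp add: joint_reach_refl)
  then show ?thesis using assms(4) unfolding orbit_of_def by blast
qed

lemma joint_reach_sym:
  assumes "perm_on f S" "perm_on g S" "(x, y) \<in> joint_reach f g S" "x \<in> S"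
  shows "(y, x) \<in> joint_reach f g S"
  using assms(3) unfolding joint_reach_def[of f g S]
proof (induction rule: rtrancl_induct)
  case (step y z)
  then have y: "y \<in> S" and z: "z = f y \<or> z = g y" by auto
  then have "z \<in> S" using perm_on_in[OF assms(1)] perm_on_in[OF assms(2)] by auto
  moreover have "y \<in> orbit_of f z" if "z = f y"
    using orbit_of_sym[OF assms(1) y] orbit_of_step[OF orbit_of_self[of y f]] that by simp
  moreover have "y \<in> orbit_of g z" if "z = g y"
    using orbit_of_sym[OF assms(2) y] orbit_of_step[OF orbit_of_self[of y g]] that by simp
  ultimately have "(z, y) \<in> joint_reach f g S"
    using z joint_reach_orbit_of_left[OF assms(1)] joint_reach_orbit_of_right[OF assms(2)] by blast
  moreover have "(y, x) \<in> joint_reach f g S" using step.IH unfolding joint_reach_def .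
  ultimately have "(z, x) \<in> joint_reach f g S" by (rule joint_reach_trans)
  then show ?case unfolding joint_reach_def .
qed simp

lemma joint_reach_Image_eq:
  assumes "perm_on f S" "perm_on g S" "(x, y) \<in> joint_reach f g S" "x \<in> S"
  shows "joint_reach f g S `` {x} = joint_reach f g S `` {y}"
proof
  show "joint_reach f g S `` {x} \<subseteq> joint_reach f g S `` {y}"
    using joint_reach_trans[OF joint_reach_sym[OF assms]] by blast
  show "joint_reach f g S `` {y} \<subseteq> joint_reach f g S `` {x}"
    using joint_reach_trans[OF assms(3)] by blast
qed

lemma card_image_le_if_factors:
  assumes "finite A" "\<And>x y. x \<in> A \<Longrightarrow> y \<in> A \<Longrightarrow> h x = h y \<Longrightarrow> g x = g y"
  shows "card (g ` A) \<le> card (h ` A)"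
proof -
  have "g x = g (inv_into A h (h x))" if "x \<in> A" for x
    using assms(2)[OF that inv_into_into[of "h x" h A]] that by (simp add: f_inv_into_f)
  then have "g ` A = (\<lambda>c. g (inv_into A h c)) ` (h ` A)" by (auto simp: image_image intro!: image_cong)
  then show ?thesis using card_image_le assms(1) finite_imageI by metis
qed

lemma num_cycles_id:
  assumes "\<forall>x\<in>S. g x = x"
  shows "num_cycles g S = card S"
proof -
  have "orbit_of g ` S = (\<lambda>x. {x}) ` S" using assms orbit_of_fixpoint by (metis image_cong)
  moreover have "inj_on (\<lambda>x. {x}) S" by (auto intro: inj_onI)
  ultimately show ?thesis unfolding num_cycles_def by (simp add: card_image)
qed

lemma num_joint_orbits_id:
  assumes "perm_on f S" "\<forall>x\<in>S. g x = x"
  shows "num_joint_orbits f g S = num_cycles f S"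
proof -
  have "joint_reach f g S `` {x} = orbit_of f x" if x: "x \<in> S" for x
  proof
    show "orbit_of f x \<subseteq> joint_reach f g S `` {x}" using joint_reach_orbit_of_left[OF assms(1) x] by blast
    show "joint_reach f g S `` {x} \<subseteq> orbit_of f x"
    proof
      fix y assume "y \<in> joint_reach f g S `` {x}"
      then have "(x, y) \<in> joint_reach f g S" by simp
      then show "y \<in> orbit_of f x" unfolding joint_reach_def
      proof (induction rule: rtrancl_induct)
        case (step y z)
        then show ?case using orbit_of_step[OF step.IH] assms(2) by auto
      qed (rule orbit_of_self)
    qed
  qed
  then show ?thesis unfolding num_joint_orbits_def num_cycles_def by (simp cong: image_cong)
qed

text \<open>A path for (f, g) either avoids the edge from a to b = g a, which (g \<circ> transpose a b)
  reroutes, or passes through a or b.\<close>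
lemma joint_reach_comp_transpose_cases:
  assumes "a \<in> S" "g a = b" "(x, y) \<in> joint_reach f g S"
  defines "R \<equiv> joint_reach f (g \<circ> transpose a b) S"
  shows "(x, y) \<in> R \<or> ((x, a) \<in> R \<or> (x, b) \<in> R) \<and> ((a, y) \<in> R \<or> (b, y) \<in> R)"
  using assms(3) unfolding joint_reach_def[of f g S]
proof (induction rule: rtrancl_induct)
  case base
  then show ?case unfolding R_def by (simp add: joint_reach_refl)
next
  case (step y z)
  have trans: "\<And>u v w. (u, v) \<in> R \<Longrightarrow> (v, w) \<in> R \<Longrightarrow> (u, w) \<in> R"
    unfolding R_def by (rule joint_reach_trans)
  have refl: "\<And>u. (u, u) \<in> R" unfolding R_def by (rule joint_reach_refl)
  from step(2) have y: "y \<in> S" and z: "z = f y \<or> z = g y" by auto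
  have "(y, z) \<in> R \<or> (y = a \<and> z = b) \<or> (y = b \<and> (a, z) \<in> R)"
  proof -
    have "(y, f y) \<in> R" "(y, (g \<circ> transpose a b) y) \<in> R" "(a, (g \<circ> transpose a b) a) \<in> R"
      unfolding R_def using joint_reach_left joint_reach_right y assms(1) by fast+
    then show ?thesis using z assms(2) by (cases "y = a"; cases "y = b") auto
  qed
  then show ?case
  proof (elim disjE conjE)
    assume "(y, z) \<in> R"
    then show ?case using step.IH trans by blast
  next
    assume "y = a" "z = b"
    then show ?case using step.IH refl by blast
  next
    assume "y = b" "(a, z) \<in> R"
    then show ?case using step.IH by blast
  qed
qed

lemma joint_reach_comp_transpose_eq:
  assumes "perm_on f S" "perm_on g S" "a \<in> S" "g a = b"
    and linked: "(a, b) \<in> joint_reach f (g \<circ> transpose a b) S"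
  shows "joint_reach f g S = joint_reach f (g \<circ> transpose a b) S"
proof
  let ?R = "joint_reach f (g \<circ> transpose a b) S"
  have b: "b \<in> S" using perm_on_in[OF assms(2,3)] assms(4) by simp
  have "(b, a) \<in> ?R"
    using joint_reach_sym[OF assms(1) perm_on_comp_transpose[OF assms(2,3) b] linked assms(3)] .
  then show "joint_reach f g S \<subseteq> ?R"
    using joint_reach_comp_transpose_cases[of a S g b, OF assms(3,4)] linked joint_reach_trans[of _ _ f _ S]
    by (meson subrelI)
  show "?R \<subseteq> joint_reach f g S"
  proof (rule joint_reach_mono)
    fix x assume x: "x \<in> S"
    have "(a, b) \<in> joint_reach f g S" using joint_reach_right[of a S g f] assms(3,4) by simp
    then have "(a, g b) \<in> joint_reach f g S" by (rule joint_reach_trans[OF _ joint_reach_right[OF b]])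
    then show "(x, f x) \<in> joint_reach f g S \<and> (x, (g \<circ> transpose a b) x) \<in> joint_reach f g S"
      using joint_reach_left[OF x] joint_reach_right[OF x] joint_reach_refl assms(4)
      by (cases "x = a"; cases "x = b") auto
  qed
qed

lemma num_joint_orbits_comp_transpose_le:
  assumes "perm_on f S" "perm_on g S" "a \<in> S" "g a = b"
  shows "num_joint_orbits f (g \<circ> transpose a b) S \<le> num_joint_orbits f g S + 1"
proof -
  let ?R = "joint_reach f g S" and ?R' = "joint_reach f (g \<circ> transpose a b) S"
  have pg': "perm_on (g \<circ> transpose a b) S"
    using perm_on_comp_transpose[OF assms(2,3)] perm_on_in[OF assms(2,3)] assms(4) by simp
  have fin: "finite S" using assms(1) unfolding perm_on_def by simp
  define T where "T = {x\<in>S. (x, a) \<notin> ?R'}"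
  have "(\<lambda>x. ?R' `` {x}) ` S \<subseteq> insert (?R' `` {a}) ((\<lambda>x. ?R' `` {x}) ` T)"
    using joint_reach_Image_eq[OF assms(1) pg'] unfolding T_def by blast
  then have "num_joint_orbits f (g \<circ> transpose a b) S \<le> card (insert (?R' `` {a}) ((\<lambda>x. ?R' `` {x}) ` T))"
    unfolding num_joint_orbits_def T_def using fin by (intro card_mono) auto
  also have "\<dots> \<le> card ((\<lambda>x. ?R' `` {x}) ` T) + 1"
    using fin unfolding T_def by (simp add: card_insert_if)
  also have "card ((\<lambda>x. ?R' `` {x}) ` T) \<le> card ((\<lambda>x. ?R `` {x}) ` T)"
  proof (rule card_image_le_if_factors)
    show "finite T" using fin unfolding T_def by simp
  next
    fix x y assume x: "x \<in> T" and y: "y \<in> T" and eq: "?R `` {x} = ?R `` {y}"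
    have "(x, y) \<in> ?R" using eq joint_reach_refl[of y f g S] by blast
    moreover have "(a, y) \<notin> ?R'" using y joint_reach_sym[OF assms(1) pg' _ assms(3)] unfolding T_def by blast
    ultimately have "(x, y) \<in> ?R'"
      using joint_reach_comp_transpose_cases[of a S g b, OF assms(3,4)] x joint_reach_trans[of _ _ f _ S]
      unfolding T_def by blast
    then show "?R' `` {x} = ?R' `` {y}" using joint_reach_Image_eq[OF assms(1) pg'] x unfolding T_def by blast
  qed
  also have "card ((\<lambda>x. ?R `` {x}) ` T) \<le> num_joint_orbits f g S"
    unfolding num_joint_orbits_def T_def using fin by (intro card_mono) auto
  finally show ?thesis by simp
qed

lemma card_support_comp_transpose_less:
  assumes "perm_on g S" "a \<in> S" "g a \<noteq> a"
  shows "card {x\<in>S. (g \<circ> transpose a (g a)) x \<noteq> x} < card {x\<in>S. g x \<noteq> x}"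
proof -
  let ?b = "g a"
  have b: "?b \<in> S" using perm_on_in[OF assms(1,2)] .
  have "g ?b \<noteq> ?b" using perm_on_inj[OF assms(1) b assms(2)] assms(3) by auto
  then have "{x\<in>S. (g \<circ> transpose a ?b) x \<noteq> x} \<subset> {x\<in>S. g x \<noteq> x}"
    using assms(2,3) b by (auto simp: transpose_def split: if_splits)
  then show ?thesis using assms(1) unfolding perm_on_def by (simp add: psubset_card_mono)
qed

text \<open>Euler's inequality for a pair of permutations (the genus of the hypermap is
  nonnegative). Induction on the support of g: composing g with the transposition of a and
  b = g a fixes b and adds one cycle to g, while it changes the cycles of f \<circ> g and the joint
  orbits in a compensating way.\<close>
theorem num_cycles_triple_le:
  assumes "perm_on f S" "perm_on g S"
  shows "num_cycles f S + num_cycles g S + num_cycles (f \<circ> g) S \<le> card S + 2 * num_joint_orbits f g S"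
  using assms(2)
proof (induction "card {x\<in>S. g x \<noteq> x}" arbitrary: g rule: less_induct)
  case less
  show ?case
  proof (cases "\<forall>x\<in>S. g x = x")
    case True
    have "num_cycles (f \<circ> g) S = num_cycles f S" using num_cycles_cong[OF assms(1), of "f \<circ> g"] True by simp
    then show ?thesis using num_joint_orbits_id[OF assms(1) True] num_cycles_id[OF True] by simp
  next
    case False
    then obtain a where a: "a \<in> S" "g a \<noteq> a" by blast
    define b where "b = g a"
    define g' where "g' = g \<circ> transpose a b"
    have b: "b \<in> S" "a \<noteq> b" using perm_on_in[OF less.prems a(1)] a(2) unfolding b_def by auto
    have pg': "perm_on g' S" unfolding g'_def by (rule perm_on_comp_transpose[OF less.prems a(1) b(1)])
    have "card {x\<in>S. g' x \<noteq> x} < card {x\<in>S. g x \<noteq> x}"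
      unfolding g'_def b_def by (rule card_support_comp_transpose_less[OF less.prems a])
    then have IH: "num_cycles f S + num_cycles g' S + num_cycles (f \<circ> g') S \<le> card S + 2 * num_joint_orbits f g' S"
      by (rule less.hyps[OF _ pg'])
    have "b \<in> orbit_of g a" unfolding b_def by (rule orbit_of_step[OF orbit_of_self])
    then have g'_cycles: "num_cycles g' S = num_cycles g S + 1"
      using num_cycles_comp_transpose[OF less.prems a(1) b] unfolding g'_def by simp
    have "f \<circ> g = (f \<circ> g') \<circ> transpose a b" unfolding g'_def by (simp add: fun_eq_iff)
    then have fg_cycles: "int (num_cycles (f \<circ> g) S) =
        int (num_cycles (f \<circ> g') S) + (if b \<in> orbit_of (f \<circ> g') a then 1 else -1)"
      using num_cycles_comp_transpose[OF perm_on_comp[OF assms(1) pg'] a(1) b] by simp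
    show ?thesis
    proof (cases "(a, b) \<in> joint_reach f g' S")
      case True
      then have "num_joint_orbits f g S = num_joint_orbits f g' S"
        using joint_reach_comp_transpose_eq[OF assms(1) less.prems a(1) b_def[symmetric]]
        unfolding num_joint_orbits_def g'_def by simp
      then show ?thesis using IH g'_cycles fg_cycles by (simp split: if_splits)
    next
      case False
      then have "b \<notin> orbit_of (f \<circ> g') a" using joint_reach_orbit_of_comp[OF assms(1) pg' a(1)] by blast
      moreover have "num_joint_orbits f g' S \<le> num_joint_orbits f g S + 1"
        using num_joint_orbits_comp_transpose_le[OF assms(1) less.prems a(1) b_def[symmetric]]
        unfolding g'_def .
      ultimately show ?thesis using IH g'_cycles fg_cycles by simp
    qed
  qed
qed

section \<open>Maps given by rotation systems\<close>

definition vertex_succ :: "('v \<Rightarrow> 'v \<Rightarrow> 'v) \<Rightarrow> 'v \<times> 'v \<Rightarrow> 'v \<times> 'v" where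
  "vertex_succ rot d = (fst d, rot (fst d) (snd d))"

lemma face_succ_eq_comp: "face_succ rot = vertex_succ rot \<circ> prod.swap"
  by (simp add: fun_eq_iff face_succ_def vertex_succ_def)

lemma funpow_vertex_succ: "(vertex_succ rot ^^ n) (u, v) = (u, (rot u ^^ n) v)"
  by (induction n) (auto simp: vertex_succ_def)

lemma fst_funpow_vertex_succ: "fst ((vertex_succ rot ^^ n) d) = fst d"
  using funpow_vertex_succ[where rot=rot and n=n and u="fst d" and v="snd d"] by simp

locale rotation_graph =
  fixes V :: "'v set" and E :: "'v set set" and rot :: "'v \<Rightarrow> 'v \<Rightarrow> 'v"
  assumes simple: "simple_graph V E" and rotation: "rotation_system V E rot"
begin

abbreviation "D \<equiv> darts E"

lemma finite_V: "finite V"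
  using simple unfolding simple_graph_def by simp

lemma edgeD:
  assumes "{u, v} \<in> E"
  shows "u \<in> V" "v \<in> V" "u \<noteq> v"
proof -
  obtain a b where "{u, v} = {a, b}" "a \<noteq> b" "a \<in> V" "b \<in> V"
    using simple assms unfolding simple_graph_def by metis
  then show "u \<in> V" "v \<in> V" "u \<noteq> v" by (auto simp: doubleton_eq_iff)
qed

lemma in_darts_iff: "(u, v) \<in> D \<longleftrightarrow> v \<in> nbrs E u"
  unfolding darts_def nbrs_def by simp

lemma darts_eq_Sigma: "D = Sigma V (nbrs E)"
  using edgeD unfolding darts_def nbrs_def by auto

lemma nbrs_subset: "nbrs E u \<subseteq> V"
  using edgeD unfolding nbrs_def by auto

lemma finite_nbrs: "finite (nbrs E u)"
  using nbrs_subset finite_V finite_subset by blast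

lemma finite_darts: "finite D"
  unfolding darts_eq_Sigma using finite_V finite_nbrs by auto

lemma dartD: "d \<in> D \<Longrightarrow> fst d \<in> V \<and> snd d \<in> V \<and> fst d \<noteq> snd d"
  unfolding darts_def using edgeD by auto

lemma swap_in_darts: "d \<in> D \<Longrightarrow> prod.swap d \<in> D"
  unfolding darts_def by (auto simp: insert_commute)

lemma rot_orbit: "u \<in> V \<Longrightarrow> v \<in> nbrs E u \<Longrightarrow> nbrs E u = {(rot u ^^ n) v | n. True}"
  using rotation unfolding rotation_system_def by blast

lemma rot_in_nbrs: "u \<in> V \<Longrightarrow> v \<in> nbrs E u \<Longrightarrow> rot u v \<in> nbrs E u"
  using rotation unfolding rotation_system_def by blast

lemma inj_on_rot: "u \<in> V \<Longrightarrow> inj_on (rot u) (nbrs E u)"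
  using rotation finite_nbrs finite_surj_inj unfolding rotation_system_def by (metis order_refl)

lemma perm_on_vertex_succ: "perm_on (vertex_succ rot) D"
proof (rule perm_onI[OF finite_darts])
  fix d assume "d \<in> D"
  then show "vertex_succ rot d \<in> D"
    using rot_in_nbrs dartD in_darts_iff unfolding vertex_succ_def by (metis prod.collapse)
next
  fix d d' assume d: "d \<in> D" and d': "d' \<in> D" and eq: "vertex_succ rot d = vertex_succ rot d'"
  then have u: "fst d = fst d'" unfolding vertex_succ_def by simp
  have "snd d \<in> nbrs E (fst d)" "snd d' \<in> nbrs E (fst d)"
    using d d' u in_darts_iff by (metis prod.collapse)+
  then have "snd d = snd d'"
    using eq u inj_on_rot[of "fst d"] dartD[OF d] unfolding vertex_succ_def inj_on_def by simp
  then show "d = d'" using u by (simp add: prod_eq_iff)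
qed

lemma perm_on_swap: "perm_on prod.swap D"
  by (rule perm_onI[OF finite_darts]) (auto simp: swap_in_darts)

lemma perm_on_face_succ: "perm_on (face_succ rot) D"
  unfolding face_succ_eq_comp by (rule perm_on_comp[OF perm_on_vertex_succ perm_on_swap])

lemma faces_eq_orbits: "faces E rot = orbit_of (face_succ rot) ` D"
  unfolding faces_def face_of_def orbit_of_def by simp

lemma orbit_of_vertex_succ:
  assumes "d \<in> D"
  shows "orbit_of (vertex_succ rot) d = {fst d} \<times> nbrs E (fst d)"
proof -
  obtain u v where d: "d = (u, v)" by (cases d)
  then have "u \<in> V" "v \<in> nbrs E u" using assms dartD in_darts_iff by auto
  then have "nbrs E u = {(rot u ^^ n) v | n. True}" by (rule rot_orbit)
  then show ?thesis unfolding orbit_of_def d funpow_vertex_succ by auto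
qed

lemma card_orbit_of_vertex_succ: "d \<in> D \<Longrightarrow> card (orbit_of (vertex_succ rot) d) = degree E (fst d)"
  using orbit_of_vertex_succ unfolding degree_def by (simp add: card_cartesian_product_singleton)

lemma num_cycles_vertex_succ:
  assumes "\<forall>u\<in>V. nbrs E u \<noteq> {}"
  shows "num_cycles (vertex_succ rot) D = card V"
proof -
  have "orbit_of (vertex_succ rot) ` D = (\<lambda>d. {fst d} \<times> nbrs E (fst d)) ` D"
    using orbit_of_vertex_succ by simp
  also have "\<dots> = (\<lambda>u. {u} \<times> nbrs E u) ` (fst ` D)" by (simp add: image_image)
  also have "fst ` D = V"
  proof
    show "fst ` D \<subseteq> V" using dartD by auto
    show "V \<subseteq> fst ` D"
    proof
      fix u assume u: "u \<in> V"
      then obtain v where "v \<in> nbrs E u" using assms by blast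
      then show "u \<in> fst ` D" using in_darts_iff by force
    qed
  qed
  finally have "orbit_of (vertex_succ rot) ` D = (\<lambda>u. {u} \<times> nbrs E u) ` V" .
  moreover have "inj_on (\<lambda>u. {u} \<times> nbrs E u) V" using assms by (auto intro!: inj_onI)
  ultimately show ?thesis unfolding num_cycles_def by (simp add: card_image)
qed

lemma card_darts: "card D = 2 * card E"
proof -
  have image: "(\<lambda>d. {fst d, snd d}) ` D = E"
  proof
    show "(\<lambda>d. {fst d, snd d}) ` D \<subseteq> E" unfolding darts_def by auto
    show "E \<subseteq> (\<lambda>d. {fst d, snd d}) ` D"
    proof
      fix e assume e: "e \<in> E"
      then obtain u v where "e = {u, v}" using simple unfolding simple_graph_def by blast
      then show "e \<in> (\<lambda>d. {fst d, snd d}) ` D"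
        using e unfolding darts_def by (intro image_eqI[of _ _ "(u, v)"]) auto
    qed
  qed
  have "card D = (\<Sum>e\<in>E. card {d\<in>D. {fst d, snd d} = e})"
    using image card_eq_sum sum.image_gen[OF finite_darts, of "\<lambda>_. 1::nat" "\<lambda>d. {fst d, snd d}"]
    by simp
  also have "\<dots> = (\<Sum>e\<in>E. 2)"
  proof (rule sum.cong[OF refl])
    fix e assume e: "e \<in> E"
    then obtain u v where uv: "e = {u, v}" "u \<noteq> v" using simple unfolding simple_graph_def by blast
    then have "{d\<in>D. {fst d, snd d} = e} = {(u, v), (v, u)}"
      using e unfolding darts_def by (auto simp: doubleton_eq_iff insert_commute)
    then show "card {d\<in>D. {fst d, snd d} = e} = 2" using uv by simp
  qed
  finally show ?thesis by simp
qed

lemma card_orbit_of_swap: "d \<in> D \<Longrightarrow> card (orbit_of prod.swap d) = 2"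
proof -
  assume d: "d \<in> D"
  have "(prod.swap ^^ n) d = (if even n then d else prod.swap d)" for n
    by (induction n) auto
  then have "orbit_of prod.swap d = {d, prod.swap d}"
    unfolding orbit_of_def by (auto intro: exI[of _ 0] exI[of _ 1])
  then show ?thesis using dartD[OF d] by (cases d) auto
qed

lemma num_cycles_swap: "num_cycles prod.swap D = card E"
proof -
  have "real (num_cycles prod.swap D) = real (card D) / 2"
    using num_cycles_eq_sum[OF perm_on_swap] card_orbit_of_swap by simp
  then show ?thesis using card_darts by simp
qed

lemma card_darts_eq_sum_degree: "card D = (\<Sum>v\<in>V. degree E v)"
  unfolding darts_eq_Sigma degree_def using finite_V finite_nbrs by simp

lemma card_darts_eq_sum_face_length: "card D = (\<Sum>f\<in>faces E rot. face_length f)"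
proof -
  let ?orb = "orbit_of (face_succ rot)"
  have "\<Union>(faces E rot) = D"
  proof
    show "\<Union>(faces E rot) \<subseteq> D"
      unfolding faces_eq_orbits using orbit_of_subset_perm_on[OF perm_on_face_succ] by blast
    show "D \<subseteq> \<Union>(faces E rot)" unfolding faces_eq_orbits using orbit_of_self by fast
  qed
  moreover have "pairwise disjnt (faces E rot)"
  proof (rule pairwiseI)
    fix Q1 Q2 assume Q: "Q1 \<in> faces E rot" "Q2 \<in> faces E rot" "Q1 \<noteq> Q2"
    then obtain x y where xy: "x \<in> D" "y \<in> D" "Q1 = ?orb x" "Q2 = ?orb y"
      unfolding faces_eq_orbits by blast
    have "?orb x = ?orb y" if "z \<in> ?orb x" "z \<in> ?orb y" for z
      using orbit_of_eq[OF perm_on_face_succ xy(1) that(1)] orbit_of_eq[OF perm_on_face_succ xy(2) that(2)]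
      by simp
    then show "disjnt Q1 Q2" using Q(3) xy unfolding disjnt_def by blast
  qed
  moreover have "finite f" if "f \<in> faces E rot" for f
    using that finite_orbit_of[OF perm_on_face_succ] unfolding faces_eq_orbits by blast
  ultimately show ?thesis
    using card_Union_disjoint[of "faces E rot"] unfolding face_length_def by simp
qed

lemma card_orbit_of_face_succ_ge3:
  assumes min_degree: "\<forall>u\<in>V. degree E u \<ge> 2" and d: "d \<in> D"
  shows "card (orbit_of (face_succ rot) d) \<ge> 3"
proof (rule ccontr)
  let ?c = "card (orbit_of (face_succ rot) d)"
  assume "\<not> 3 \<le> ?c"
  then have "?c = 1 \<or> ?c = 2" using card_orbit_of_pos[OF perm_on_face_succ d] by linarith
  then have "(face_succ rot ^^ 2) d = d"
    using funpow_card_orbit_of[OF perm_on_face_succ d] funpow_mult_fixpoint[of 1 "face_succ rot" d 2]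
    by auto
  moreover obtain u v where uv: "d = (u, v)" by (cases d)
  ultimately have "rot v u = u" by (simp add: face_succ_def numeral_2_eq_2)
  have "v \<in> V" "u \<in> nbrs E v" using d uv dartD in_darts_iff swap_in_darts by fastforce+
  then have "nbrs E v = {(rot v ^^ n) u | n. True}" by (rule rot_orbit)
  moreover have "(rot v ^^ n) u = u" for n by (induction n) (simp_all add: \<open>rot v u = u\<close>)
  ultimately have "degree E v = 1" unfolding degree_def by simp
  then show False using min_degree \<open>v \<in> V\<close> by force
qed

lemma darts_closed_eq:
  assumes connected: "connected_on V E"
    and A: "A \<subseteq> D" "A \<noteq> {}" "\<And>d. d \<in> A \<Longrightarrow> vertex_succ rot d \<in> A" "\<And>d. d \<in> A \<Longrightarrow> prod.swap d \<in> A"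
  shows "A = D"
proof -
  let ?U = "fst ` A"
  have all_at: "(u, v) \<in> A" if u: "u \<in> ?U" and uv: "(u, v) \<in> D" for u v
  proof -
    obtain d where d: "d \<in> A" "fst d = u" using u by blast
    have "orbit_of (vertex_succ rot) d \<subseteq> A" by (rule orbit_of_subset[OF d(1) A(3)])
    then show ?thesis using orbit_of_vertex_succ[of d] d A(1) uv in_darts_iff by auto
  qed
  obtain d where d: "d \<in> A" using A(2) by blast
  have "v \<in> ?U" if "v \<in> V" for v
  proof -
    have "(fst d, v) \<in> {(a, b). a \<in> V \<and> b \<in> V \<and> {a, b} \<in> E}\<^sup>*"
      using connected dartD d A(1) that unfolding connected_on_def by blast
    then show ?thesis
    proof (induction rule: rtrancl_induct)
      case (step a b)
      then have "(a, b) \<in> A" using all_at unfolding darts_def by blast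
      then show ?case using A(4) by force
    qed (use d in blast)
  qed
  then show ?thesis using all_at A(1) dartD by (metis prod.collapse subsetI subset_antisym)
qed

end

section \<open>Plane maps with one exceptional vertex\<close>

lemma near_regular_face_length_bound:
  fixes n e F l L k k0 :: nat
  assumes euler: "int n - int e + int F = 2"
    and degrees: "2 * e = k * (n - 1) + k0"
    and faces: "L * (F - 1) + l = 2 * e"
    and pos: "1 \<le> n" "1 \<le> F" "1 \<le> l" "1 \<le> k"
  shows "(k - 2) * L < 2 * k"
proof (rule ccontr)
  assume "\<not> (k - 2) * L < 2 * k"
  then have nat_big: "2 * k \<le> (k - 2) * L" by simp
  then have "2 \<le> k" using pos(4) by (cases "2 \<le> k") auto
  have "int (2 * k) \<le> int ((k - 2) * L)" using nat_big by (simp only: of_nat_le_iff)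
  then have big: "2 * int k \<le> (int k - 2) * int L" using \<open>2 \<le> k\<close> by (simp add: of_nat_diff)
  have degrees': "2 * int e = int k * (int n - 1) + int k0"
    using arg_cong[OF degrees, of int] pos(1) by (simp add: of_nat_diff)
  have faces': "int L * (int F - 1) = 2 * int e - int l"
    using arg_cong[OF faces, of int] pos(2) by (simp add: of_nat_diff)
  have F: "int F - 1 = int e - int n + 1" using euler by linarith
  have "int k * (int F - 1) = int k * (int e - int n + 1)" by (simp only: F)
  also have "\<dots> = int k * int e - int k * int n + int k" by (simp add: algebra_simps)
  also have "\<dots> = (int k - 2) * int e + int k0" using degrees' by (simp add: algebra_simps)
  finally have kF: "int k * (int F - 1) = (int k - 2) * int e + int k0" .
  have "int k * (2 * int e - int l) = int L * ((int k - 2) * int e + int k0)"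
    by (metis faces' kF mult.left_commute)
  also have "\<dots> \<ge> 2 * int k * int e"
  proof -
    have "2 * int k * int e \<le> (int k - 2) * int L * int e" by (rule mult_right_mono[OF big]) simp
    moreover have "int L * ((int k - 2) * int e + int k0) = (int k - 2) * int L * int e + int L * int k0"
      by (simp add: algebra_simps)
    moreover have "0 \<le> int L * int k0" by simp
    ultimately show ?thesis by linarith
  qed
  finally have "int k * int l \<le> 0" by (simp add: algebra_simps)
  then show False using pos(3,4) by (simp add: mult_le_0_iff)
qed

locale near_regular_plane_map = rotation_graph V E rot for V :: "'v set" and E rot +
  fixes outer :: "('v \<times> 'v) set" and w :: 'v and k k0 :: nat
  assumes euler: "int (card V) - int (card E) + int (card (faces E rot)) = 2"
    and outer_face: "outer \<in> faces E rot"
    and connected: "connected_on V E"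
    and w_in_V: "w \<in> V" and w_on_outer: "vertex_on_face w outer"
    and degree_w: "degree E w = k0" and degree_other: "\<forall>v\<in>V - {w}. degree E v = k"
    and k0_ge: "2 \<le> k0" and k0_less: "k0 < k"
begin

lemma degree_ge2: "u \<in> V \<Longrightarrow> degree E u \<ge> 2"
  using degree_w degree_other k0_ge k0_less by (cases "u = w") auto

lemma nbrs_nonempty: "u \<in> V \<Longrightarrow> nbrs E u \<noteq> {}"
  using degree_ge2[of u] unfolding degree_def by auto

lemma card_darts_degrees: "card D = k * (card V - 1) + k0"
proof -
  have "(\<Sum>v\<in>V. degree E v) = (\<Sum>v\<in>V - {w}. degree E v) + degree E w"
    using finite_V w_in_V by (simp add: sum.remove add.commute)
  also have "\<dots> = k * (card V - 1) + k0" using degree_other degree_w finite_V w_in_V by simp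
  finally show ?thesis using card_darts_eq_sum_degree by simp
qed

lemma outer_eq_orbit: "d \<in> outer \<Longrightarrow> orbit_of (face_succ rot) d = outer"
  using outer_face orbit_of_eq[OF perm_on_face_succ] unfolding faces_eq_orbits by blast

lemma outer_subset: "outer \<subseteq> D"
  using outer_face orbit_of_subset_perm_on[OF perm_on_face_succ] unfolding faces_eq_orbits by blast

lemma finite_outer: "finite outer"
  using outer_subset finite_darts finite_subset by blast

lemma card_outer_pos: "card outer > 0"
  using outer_face card_orbit_of_pos[OF perm_on_face_succ] unfolding faces_eq_orbits by blast

lemma face_succ_in_outer: "d \<in> outer \<Longrightarrow> face_succ rot d \<in> outer"
  using outer_eq_orbit[of d] orbit_of_step[OF orbit_of_self[of d "face_succ rot"]] by simp

lemma funpow_face_succ_notin_outer: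
  assumes "d \<in> D - outer"
  shows "(face_succ rot ^^ n) d \<notin> outer"
proof
  assume "(face_succ rot ^^ n) d \<in> outer"
  moreover have "orbit_of (face_succ rot) ((face_succ rot ^^ n) d) = orbit_of (face_succ rot) d"
    using orbit_of_eq[OF perm_on_face_succ _ funpow_in_orbit_of] assms by blast
  ultimately have "orbit_of (face_succ rot) d = outer" using outer_eq_orbit by simp
  then show False using orbit_of_self[of d] assms by blast
qed

lemma internal_faces_eq: "orbit_of (face_succ rot) ` (D - outer) = faces E rot - {outer}"
proof
  show "orbit_of (face_succ rot) ` (D - outer) \<subseteq> faces E rot - {outer}"
    unfolding faces_eq_orbits using orbit_of_self by fast
  show "faces E rot - {outer} \<subseteq> orbit_of (face_succ rot) ` (D - outer)"
    unfolding faces_eq_orbits using outer_eq_orbit by blast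
qed

lemma face_length_bound:
  assumes "\<forall>f\<in>faces E rot - {outer}. face_length f = L"
  shows "(k - 2) * L < 2 * k"
proof (rule near_regular_face_length_bound)
  have finite_faces: "finite (faces E rot)" unfolding faces_eq_orbits using finite_darts by simp
  have "card D = (\<Sum>f\<in>faces E rot - {outer}. face_length f) + face_length outer"
    using card_darts_eq_sum_face_length finite_faces outer_face by (simp add: sum.remove)
  also have "\<dots> = L * (card (faces E rot) - 1) + card outer"
    using assms finite_faces outer_face unfolding face_length_def by simp
  finally show "L * (card (faces E rot) - 1) + card outer = 2 * card E" using card_darts by simp
  show "2 * card E = k * (card V - 1) + k0" using card_darts card_darts_degrees by simp
  have "card V > 0" "card (faces E rot) > 0"
    using w_in_V finite_V outer_face finite_faces by (auto simp: card_gt_0_iff)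
  then show "1 \<le> card V" "1 \<le> card (faces E rot)" by simp_all
  show "1 \<le> card outer" using card_outer_pos by simp
  show "1 \<le> k" using k0_ge k0_less by simp
qed (rule euler)

definition w_entry :: "'v \<times> 'v" where
  "w_entry = (SOME d. d \<in> outer \<and> snd d = w)"

lemma w_entry: "w_entry \<in> outer" "snd w_entry = w"
proof -
  obtain y where y: "(w, y) \<in> outer" using w_on_outer unfolding vertex_on_face_def by blast
  then obtain d where d: "d \<in> D" "face_succ rot d = (w, y)"
    using perm_on_surj[OF perm_on_face_succ] outer_subset by blast
  then have "snd d = w" unfolding face_succ_def by simp
  moreover have "d \<in> outer"
  proof -
    have "(w, y) \<in> orbit_of (face_succ rot) d"
      using orbit_of_step[OF orbit_of_self[of d "face_succ rot"]] d(2) by simp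
    then have "orbit_of (face_succ rot) d = outer"
      using orbit_of_eq[OF perm_on_face_succ d(1)] outer_eq_orbit[OF y] by simp
    then show ?thesis using orbit_of_self[of d "face_succ rot"] by simp
  qed
  ultimately have "\<exists>d. d \<in> outer \<and> snd d = w" by blast
  then show "w_entry \<in> outer" "snd w_entry = w" unfolding w_entry_def by (metis (mono_tags) someI_ex)+
qed

lemma card_orbit_of_w_dart: "card (orbit_of (vertex_succ rot) (prod.swap w_entry)) = k0"
proof -
  have "prod.swap w_entry \<in> D" using swap_in_darts w_entry(1) outer_subset by blast
  then show ?thesis using card_orbit_of_vertex_succ w_entry(2) degree_w by simp
qed

end

section \<open>Twisted covers\<close>

definition triangle_rep :: "nat \<Rightarrow> nat \<Rightarrow> nat \<Rightarrow> (nat \<Rightarrow> nat) \<Rightarrow> (nat \<Rightarrow> nat) \<Rightarrow> bool" where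
  "triangle_rep k L N s t \<longleftrightarrow> perm_on s {..<N} \<and> perm_on t {..<N} \<and>
     (\<forall>p<N. (s ^^ k) p = p) \<and> (\<forall>p<N. t (t p) = p) \<and> (\<forall>p<N. ((s \<circ> t) ^^ L) p = p)"

definition twist_nontrivial :: "nat \<Rightarrow> nat \<Rightarrow> (nat \<Rightarrow> nat) \<Rightarrow> (nat \<Rightarrow> nat) \<Rightarrow> nat \<Rightarrow> bool" where
  "twist_nontrivial L N s t m \<longleftrightarrow> (\<forall>r<L. \<exists>p<N. ((s \<circ> t) ^^ r) ((s ^^ m) (t p)) \<noteq> p)"

lemma perm_on_lessThanI:
  "(\<forall>p<N. f p < N) \<Longrightarrow> (\<forall>p<N. \<forall>q<N. f p = f q \<longrightarrow> p = q) \<Longrightarrow> perm_on f {..<N::nat}"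
  by (rule perm_onI) auto

lemmas finite_nat_quantifiers = All_less_Suc Ex_less_Suc numeral_eq_Suc

lemma triangle_rep_3_3: "triangle_rep 3 3 4 ((!) [0, 2, 3, 1]) ((!) [1, 0, 3, 2])"
  unfolding triangle_rep_def by (intro conjI perm_on_lessThanI) (simp_all add: finite_nat_quantifiers)

lemma triangle_rep_3_4: "triangle_rep 3 4 3 ((!) [1, 2, 0]) ((!) [0, 2, 1])"
  unfolding triangle_rep_def by (intro conjI perm_on_lessThanI) (simp_all add: finite_nat_quantifiers)

lemma triangle_rep_3_5: "triangle_rep 3 5 5 ((!) [0, 1, 3, 4, 2]) ((!) [2, 3, 0, 1, 4])"
  unfolding triangle_rep_def by (intro conjI perm_on_lessThanI) (simp_all add: finite_nat_quantifiers)

lemma triangle_rep_4_3: "triangle_rep 4 3 4 ((!) [1, 2, 3, 0]) ((!) [0, 1, 3, 2])"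
  unfolding triangle_rep_def by (intro conjI perm_on_lessThanI) (simp_all add: finite_nat_quantifiers)

lemma triangle_rep_5_3: "triangle_rep 5 3 5 ((!) [1, 2, 3, 4, 0]) ((!) [0, 2, 1, 4, 3])"
  unfolding triangle_rep_def by (intro conjI perm_on_lessThanI) (simp_all add: finite_nat_quantifiers)

lemma triangle_rep_twist_exists:
  assumes "(k, L) \<in> {(3, 3), (3, 4), (3, 5), (4, 3), (5, 3)}" "2 \<le> m" "m < k"
  shows "\<exists>N s t. triangle_rep k L N s t \<and> twist_nontrivial L N s t m"
proof -
  consider "k = 3" "L = 3" "m = 2" | "k = 3" "L = 4" "m = 2" | "k = 3" "L = 5" "m = 2"
    | "k = 4" "L = 3" "m = 2" | "k = 4" "L = 3" "m = 3"
    | "k = 5" "L = 3" "m = 2" | "k = 5" "L = 3" "m = 3" | "k = 5" "L = 3" "m = 4"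
    using assms by (auto simp: less_Suc_eq numeral_eq_Suc)
  then show ?thesis
    using triangle_rep_3_3 triangle_rep_3_4 triangle_rep_3_5 triangle_rep_4_3 triangle_rep_5_3
    unfolding twist_nontrivial_def
    by cases (fastforce simp: finite_nat_quantifiers)+
qed

locale twisted_cover = near_regular_plane_map V E rot outer w k k0
  for V :: "'v set" and E rot outer w k k0 +
  fixes L N :: nat and s t :: "nat \<Rightarrow> nat"
  assumes internal_length: "\<forall>f\<in>faces E rot - {outer}. face_length f = L"
    and L_pos: "0 < L"
    and rep: "triangle_rep k L N s t"
begin

lemma perm_on_s: "perm_on s {..<N}" and perm_on_t: "perm_on t {..<N}"
  and s_pow_k: "p < N \<Longrightarrow> (s ^^ k) p = p" and t_t: "p < N \<Longrightarrow> t (t p) = p"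
  and st_pow_L: "p < N \<Longrightarrow> ((s \<circ> t) ^^ L) p = p"
  using rep unfolding triangle_rep_def by auto

text \<open>The lift of the rotation turns the sheets by s, except at the dart prod.swap w_entry of w,
  where it turns them by s^(k + 1 - k0): once around w this accumulates s^k, so the lifted
  rotation still closes up after k0 steps, while the face entering w through w_entry is twisted.\<close>
definition lifted_rot :: "('v \<times> 'v) \<times> nat \<Rightarrow> ('v \<times> 'v) \<times> nat" where
  "lifted_rot = skew (vertex_succ rot) (prod.swap w_entry) (s ^^ (k + 1 - k0)) s"

definition lifted_swap :: "('v \<times> 'v) \<times> nat \<Rightarrow> ('v \<times> 'v) \<times> nat" where
  "lifted_swap = map_prod prod.swap t"

abbreviation lifted_face :: "('v \<times> 'v) \<times> nat \<Rightarrow> ('v \<times> 'v) \<times> nat" where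
  "lifted_face \<equiv> lifted_rot \<circ> lifted_swap"

lemma lifted_face_eq_skew: "lifted_face = skew (face_succ rot) w_entry (s ^^ (k + 1 - k0) \<circ> t) (s \<circ> t)"
proof
  fix x :: "('v \<times> 'v) \<times> nat"
  have "prod.swap (fst x) = prod.swap w_entry \<longleftrightarrow> fst x = w_entry" by (metis swap_swap)
  then show "lifted_face x = skew (face_succ rot) w_entry (s ^^ (k + 1 - k0) \<circ> t) (s \<circ> t) x"
    by (simp add: lifted_rot_def lifted_swap_def face_succ_eq_comp skew_def map_prod_def case_prod_unfold)
qed

lemma perm_on_lifted_rot: "perm_on lifted_rot (D \<times> {..<N})"
  unfolding lifted_rot_def
  by (rule perm_on_skew[OF perm_on_vertex_succ perm_on_funpow[OF perm_on_s] perm_on_s])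

lemma perm_on_lifted_swap: "perm_on lifted_swap (D \<times> {..<N})"
  unfolding lifted_swap_def by (rule perm_on_map_prod[OF perm_on_swap perm_on_t])

lemma perm_on_lifted_face: "perm_on lifted_face (D \<times> {..<N})"
  by (rule perm_on_comp[OF perm_on_lifted_rot perm_on_lifted_swap])

lemma lifted_rot_period_at_w:
  assumes "q < N"
  shows "(lifted_rot ^^ k0) (prod.swap w_entry, q) = (prod.swap w_entry, q)"
proof -
  let ?dw = "prod.swap w_entry"
  have dw: "?dw \<in> D" using swap_in_darts w_entry(1) outer_subset by blast
  have k0: "Suc (k0 - 1) = k0" using k0_ge by simp
  have avoid: "\<forall>i<k0 - 1. (vertex_succ rot ^^ i) (vertex_succ rot ?dw) \<noteq> ?dw"
    using funpow_ne_self_below_card_orbit_of[where f="vertex_succ rot" and x="?dw"] card_orbit_of_w_dart k0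
    by simp
  have "(lifted_rot ^^ k0) (?dw, q) = (lifted_rot ^^ (k0 - 1)) (lifted_rot (?dw, q))"
    by (metis k0 funpow_Suc_right o_apply)
  also have "lifted_rot (?dw, q) = (vertex_succ rot ?dw, (s ^^ (k + 1 - k0)) q)"
    by (simp add: lifted_rot_def skew_def)
  also have "(lifted_rot ^^ (k0 - 1)) \<dots> = ((vertex_succ rot ^^ k0) ?dw, (s ^^ k) q)"
  proof -
    have "k0 - 1 + (k + 1 - k0) = k" using k0_ge k0_less by simp
    then show ?thesis
      unfolding lifted_rot_def funpow_skew_avoiding[OF avoid]
      by (metis k0 funpow_Suc_right funpow_add o_apply)
  qed
  also have "\<dots> = (?dw, q)"
    using funpow_card_orbit_of[OF perm_on_vertex_succ dw] card_orbit_of_w_dart s_pow_k[OF assms] by simp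
  finally show ?thesis .
qed

lemma lifted_rot_period_off_w:
  assumes "d \<in> D" "fst d \<noteq> w" "p < N"
  shows "(lifted_rot ^^ k) (d, p) = (d, p)"
proof -
  have "\<forall>i<k. (vertex_succ rot ^^ i) d \<noteq> prod.swap w_entry"
    using fst_funpow_vertex_succ[where rot=rot and d=d] w_entry(2) assms(2) by (metis fst_swap)
  then have "(lifted_rot ^^ k) (d, p) = ((vertex_succ rot ^^ k) d, (s ^^ k) p)"
    unfolding lifted_rot_def by (rule funpow_skew_avoiding)
  moreover have "card (orbit_of (vertex_succ rot) d) = k"
    using card_orbit_of_vertex_succ[OF assms(1)] degree_other dartD[OF assms(1)] assms(2) by simp
  ultimately show ?thesis using funpow_card_orbit_of[OF perm_on_vertex_succ assms(1)] s_pow_k[OF assms(3)] by simp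
qed

lemma card_orbit_lifted_rot_le:
  assumes x: "x \<in> D \<times> {..<N}"
  shows "card (orbit_of lifted_rot x) \<le> card (orbit_of (vertex_succ rot) (fst x))"
proof (cases "fst (fst x) = w")
  case False
  then show ?thesis
    using lifted_rot_period_off_w[of "fst x" "snd x"] x card_orbit_of_vertex_succ degree_other dartD k0_less
    by (intro card_orbit_of_le_period) (auto simp: mem_Times_iff)
next
  case True
  let ?dw = "prod.swap w_entry"
  have d: "fst x \<in> D" using x by auto
  have "?dw \<in> orbit_of (vertex_succ rot) (fst x)"
    using orbit_of_vertex_succ[OF d] True w_entry(2) swap_in_darts[of w_entry] w_entry(1) outer_subset
      in_darts_iff by (cases w_entry) auto
  then obtain j where j: "(vertex_succ rot ^^ j) (fst x) = ?dw" unfolding orbit_of_def by auto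
  define q where "q = snd ((lifted_rot ^^ j) x)"
  have "fst ((lifted_rot ^^ j) x) = ?dw" using j unfolding lifted_rot_def fst_funpow_skew .
  then have xq: "(lifted_rot ^^ j) x = (?dw, q)" unfolding q_def by (simp add: prod_eq_iff)
  then have "q < N" using perm_on_funpow_in[OF perm_on_lifted_rot x, of j] by auto
  have "card (orbit_of lifted_rot x) = card (orbit_of lifted_rot (?dw, q))"
    using orbit_of_eq[OF perm_on_lifted_rot x funpow_in_orbit_of[where f=lifted_rot and n=j]] xq by simp
  also have "\<dots> \<le> k0"
    using lifted_rot_period_at_w[OF \<open>q < N\<close>] k0_ge by (intro card_orbit_of_le_period) simp_all
  also have "k0 = card (orbit_of (vertex_succ rot) (fst x))"
    using card_orbit_of_vertex_succ[OF d] True degree_w by simp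
  finally show ?thesis .
qed

lemma card_orbit_lifted_swap_le:
  assumes x: "x \<in> D \<times> {..<N}"
  shows "card (orbit_of lifted_swap x) \<le> card (orbit_of prod.swap (fst x))"
proof -
  have "(lifted_swap ^^ 2) x = x"
    using t_t x unfolding lifted_swap_def by (cases x) (simp add: numeral_2_eq_2)
  then show ?thesis using card_orbit_of_le_period card_orbit_of_swap x by fastforce
qed

lemma lifted_face_internal:
  assumes x: "x \<in> (D - outer) \<times> {..<N}"
  shows "lifted_face x \<in> (D - outer) \<times> {..<N}"
  and "card (orbit_of lifted_face x) \<le> card (orbit_of (face_succ rot) (fst x))"
proof -
  obtain d p where dp: "x = (d, p)" "d \<in> D - outer" "p < N" using x by auto
  have avoid: "\<forall>i<n. (face_succ rot ^^ i) d \<noteq> w_entry" for n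
    using funpow_face_succ_notin_outer[OF dp(2)] w_entry(1) by metis
  have "lifted_face x \<in> D \<times> {..<N}" using perm_on_in[OF perm_on_lifted_face] x by blast
  moreover have "fst (lifted_face x) \<notin> outer"
    using funpow_face_succ_notin_outer[OF dp(2), of 1] dp(1) unfolding lifted_face_eq_skew fst_skew by simp
  ultimately show "lifted_face x \<in> (D - outer) \<times> {..<N}" by (auto simp: mem_Times_iff)
  have "face_length (orbit_of (face_succ rot) d) = L"
    using internal_length internal_faces_eq dp(2) by blast
  then have "card (orbit_of (face_succ rot) d) = L" unfolding face_length_def .
  moreover have "(lifted_face ^^ L) (d, p) = ((face_succ rot ^^ L) d, ((s \<circ> t) ^^ L) p)"
    unfolding lifted_face_eq_skew by (rule funpow_skew_avoiding[OF avoid])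
  ultimately have "(lifted_face ^^ L) x = x"
    using funpow_card_orbit_of[OF perm_on_face_succ, of d] dp st_pow_L by simp
  then show "card (orbit_of lifted_face x) \<le> card (orbit_of (face_succ rot) (fst x))"
    using card_orbit_of_le_period L_pos \<open>card (orbit_of (face_succ rot) d) = L\<close> dp(1) by fastforce
qed

lemma lifted_face_outer: "x \<in> outer \<times> {..<N} \<Longrightarrow> lifted_face x \<in> outer \<times> {..<N}"
proof -
  assume x: "x \<in> outer \<times> {..<N}"
  then have "lifted_face x \<in> D \<times> {..<N}" using perm_on_in[OF perm_on_lifted_face] outer_subset by blast
  moreover have "fst (lifted_face x) \<in> outer"
    using face_succ_in_outer x unfolding lifted_face_eq_skew fst_skew by auto
  ultimately show ?thesis by auto
qed

lemma card_orbit_lifted_face_ge: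
  "x \<in> D \<times> {..<N} \<Longrightarrow> card (orbit_of (face_succ rot) (fst x)) \<le> card (orbit_of lifted_face x)"
  by (rule card_orbit_of_le_of_semiconj[OF perm_on_lifted_face]) (simp_all add: lifted_face_eq_skew fst_skew)

lemma exists_long_lifted_outer_cycle:
  assumes twist: "twist_nontrivial L N s t (k + 1 - k0)"
  shows "\<exists>p<N. card (orbit_of lifted_face (w_entry, p)) \<noteq> card outer"
proof -
  let ?l = "card outer"
  have "(?l - 1) mod L < L" using L_pos by simp
  then obtain p where p: "p < N" "((s \<circ> t) ^^ ((?l - 1) mod L)) ((s ^^ (k + 1 - k0)) (t p)) \<noteq> p"
    using twist unfolding twist_nontrivial_def by blast
  define q where "q = (s ^^ (k + 1 - k0)) (t p)"
  have q: "q < N" using perm_on_in[OF perm_on_funpow[OF perm_on_s]] perm_on_in[OF perm_on_t] p(1)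
    unfolding q_def by simp
  have avoid: "\<forall>i<?l - 1. (face_succ rot ^^ i) (face_succ rot w_entry) \<noteq> w_entry"
    using funpow_ne_self_below_card_orbit_of[where f="face_succ rot" and x=w_entry]
      outer_eq_orbit[OF w_entry(1)] by simp
  have "(lifted_face ^^ ?l) (w_entry, p) = (lifted_face ^^ (?l - 1)) (lifted_face (w_entry, p))"
    using card_outer_pos by (metis Suc_diff_1 funpow_Suc_right o_apply)
  also have "lifted_face (w_entry, p) = (face_succ rot w_entry, q)"
    unfolding lifted_face_eq_skew q_def by (simp add: skew_def)
  also have "(lifted_face ^^ (?l - 1)) (face_succ rot w_entry, q) =
      ((face_succ rot ^^ (?l - 1)) (face_succ rot w_entry), ((s \<circ> t) ^^ (?l - 1)) q)"
    unfolding lifted_face_eq_skew by (rule funpow_skew_avoiding[OF avoid])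
  finally have "snd ((lifted_face ^^ ?l) (w_entry, p)) = ((s \<circ> t) ^^ ((?l - 1) mod L)) q"
    using funpow_mod_period[OF st_pow_L[OF q], of "?l - 1"] by (simp only: snd_conv)
  then have not_closed: "(lifted_face ^^ ?l) (w_entry, p) \<noteq> (w_entry, p)" using p(2) unfolding q_def by auto
  have "(w_entry, p) \<in> D \<times> {..<N}" using w_entry(1) outer_subset p(1) by auto
  then have "card (orbit_of lifted_face (w_entry, p)) \<noteq> ?l"
    using funpow_card_orbit_of[OF perm_on_lifted_face] not_closed by metis
  then show ?thesis using p(1) by blast
qed

lemma card_lifted_outer_cycles_lt:
  assumes "twist_nontrivial L N s t (k + 1 - k0)"
  shows "card (orbit_of lifted_face ` (outer \<times> {..<N})) < N"
proof -
  let ?l = "card outer" and ?OP = "outer \<times> {..<N}"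
  have sub: "?OP \<subseteq> D \<times> {..<N}" using outer_subset by auto
  have ge: "real ?l \<le> real (card (orbit_of lifted_face x))" if "x \<in> ?OP" for x
    using card_orbit_lifted_face_ge[of x] sub that outer_eq_orbit by (auto simp: mem_Times_iff)
  obtain p where p: "p < N" "card (orbit_of lifted_face (w_entry, p)) \<noteq> ?l"
    using exists_long_lifted_outer_cycle[OF assms] by blast
  have x0: "(w_entry, p) \<in> ?OP" using w_entry(1) p(1) by simp
  have "real (card (orbit_of lifted_face ` ?OP)) = (\<Sum>x\<in>?OP. 1 / real (card (orbit_of lifted_face x)))"
    by (rule card_orbits_eq_sum[OF perm_on_lifted_face sub lifted_face_outer])
  also have "\<dots> < (\<Sum>x\<in>?OP. 1 / real ?l)"
  proof (rule sum_strict_mono_ex1)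
    show "finite ?OP" using finite_outer by simp
    show "\<forall>x\<in>?OP. 1 / real (card (orbit_of lifted_face x)) \<le> 1 / real ?l"
      using ge card_outer_pos by (simp add: frac_le)
    have "real ?l < real (card (orbit_of lifted_face (w_entry, p)))" using ge[OF x0] p(2) by simp
    then show "\<exists>x\<in>?OP. 1 / real (card (orbit_of lifted_face x)) < 1 / real ?l"
      using x0 card_outer_pos by (intro bexI[OF _ x0]) (simp add: frac_less2)
  qed
  also have "\<dots> = real N" using card_outer_pos by (simp add: card_cartesian_product)
  finally show ?thesis by simp
qed

lemma joint_reach_lifted_outer:
  assumes x: "x \<in> D \<times> {..<N}"
  shows "\<exists>y\<in>outer \<times> {..<N}. (x, y) \<in> joint_reach lifted_rot lifted_swap (D \<times> {..<N})"
proof -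
  let ?R = "joint_reach lifted_rot lifted_swap (D \<times> {..<N})"
  have closed: "y \<in> D \<times> {..<N}" if "(x, y) \<in> ?R" for y
    by (rule joint_reach_closed[OF perm_on_lifted_rot perm_on_lifted_swap that x])
  define A where "A = {d\<in>D. \<exists>p. (x, (d, p)) \<in> ?R}"
  have step: "fst y \<in> A" if "(x, z) \<in> ?R" "(z, y) \<in> ?R" for y z
  proof -
    have "(x, y) \<in> ?R" by (rule joint_reach_trans[OF that])
    moreover from this have "y \<in> D \<times> {..<N}" by (rule closed)
    ultimately show ?thesis unfolding A_def by (cases y) auto
  qed
  have "A = D"
  proof (rule darts_closed_eq[OF connected])
    show "A \<subseteq> D" unfolding A_def by blast
    have "fst x \<in> A" using x joint_reach_refl[of x] unfolding A_def by (cases x) auto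
    then show "A \<noteq> {}" by blast
  next
    fix d assume "d \<in> A"
    then obtain p where p: "(x, (d, p)) \<in> ?R" unfolding A_def by blast
    have dp: "(d, p) \<in> D \<times> {..<N}" by (rule closed[OF p])
    show "vertex_succ rot d \<in> A"
      using step[OF p joint_reach_left[OF dp]] by (simp add: lifted_rot_def fst_skew)
    show "prod.swap d \<in> A"
      using step[OF p joint_reach_right[OF dp]] by (simp add: lifted_swap_def)
  qed
  then obtain p where p: "(x, (w_entry, p)) \<in> ?R" using w_entry(1) outer_subset unfolding A_def by blast
  then have "(w_entry, p) \<in> outer \<times> {..<N}" using closed[OF p] w_entry(1) by auto
  then show ?thesis using p by blast
qed

lemma num_joint_orbits_lifted_le:
  "num_joint_orbits lifted_rot lifted_swap (D \<times> {..<N}) \<le> card (orbit_of lifted_face ` (outer \<times> {..<N}))"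
proof -
  let ?R = "joint_reach lifted_rot lifted_swap (D \<times> {..<N})" and ?OP = "outer \<times> {..<N}"
  have "(\<lambda>x. ?R `` {x}) ` (D \<times> {..<N}) = (\<lambda>x. ?R `` {x}) ` ?OP"
  proof
    show "(\<lambda>x. ?R `` {x}) ` ?OP \<subseteq> (\<lambda>x. ?R `` {x}) ` (D \<times> {..<N})" using outer_subset by blast
    show "(\<lambda>x. ?R `` {x}) ` (D \<times> {..<N}) \<subseteq> (\<lambda>x. ?R `` {x}) ` ?OP"
    proof
      fix C assume "C \<in> (\<lambda>x. ?R `` {x}) ` (D \<times> {..<N})"
      then obtain x where x: "x \<in> D \<times> {..<N}" "C = ?R `` {x}" by blast
      obtain y where y: "y \<in> ?OP" "(x, y) \<in> ?R" using joint_reach_lifted_outer[OF x(1)] by blast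
      have "C = ?R `` {y}"
        using joint_reach_Image_eq[OF perm_on_lifted_rot perm_on_lifted_swap y(2) x(1)] x(2) by simp
      then show "C \<in> (\<lambda>x. ?R `` {x}) ` ?OP" using y(1) by blast
    qed
  qed
  moreover have "card ((\<lambda>x. ?R `` {x}) ` ?OP) \<le> card (orbit_of lifted_face ` ?OP)"
  proof (rule card_image_le_if_factors)
    show "finite ?OP" using finite_outer by simp
  next
    fix x y assume x: "x \<in> ?OP" and "y \<in> ?OP" and "orbit_of lifted_face x = orbit_of lifted_face y"
    then have y: "y \<in> orbit_of lifted_face x" using orbit_of_self[of y lifted_face] by simp
    have xD: "x \<in> D \<times> {..<N}" using x outer_subset by auto
    from xD y have "(x, y) \<in> ?R" by (rule joint_reach_orbit_of_comp[OF perm_on_lifted_rot perm_on_lifted_swap])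
    then show "?R `` {x} = ?R `` {y}" by (rule joint_reach_Image_eq[OF perm_on_lifted_rot perm_on_lifted_swap _ xD])
  qed
  ultimately show ?thesis unfolding num_joint_orbits_def by simp
qed

lemma num_cycles_lifted_rot_ge: "N * card V \<le> num_cycles lifted_rot (D \<times> {..<N})"
  using card_orbits_lift_ge[OF perm_on_vertex_succ perm_on_lifted_rot _ subset_refl
      perm_on_in[OF perm_on_vertex_succ] perm_on_in[OF perm_on_lifted_rot] card_orbit_lifted_rot_le]
    num_cycles_vertex_succ nbrs_nonempty
  unfolding num_cycles_def by simp

lemma num_cycles_lifted_swap_ge: "N * card E \<le> num_cycles lifted_swap (D \<times> {..<N})"
  using card_orbits_lift_ge[OF perm_on_swap perm_on_lifted_swap _ subset_refl
      perm_on_in[OF perm_on_swap] perm_on_in[OF perm_on_lifted_swap] card_orbit_lifted_swap_le]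
    num_cycles_swap
  unfolding num_cycles_def by simp

lemma num_cycles_lifted_face_ge:
  "N * (card (faces E rot) - 1) + card (orbit_of lifted_face ` (outer \<times> {..<N}))
     \<le> num_cycles lifted_face (D \<times> {..<N})"
proof -
  let ?I = "(D - outer) \<times> {..<N}" and ?OP = "outer \<times> {..<N}"
  have "card (faces E rot - {outer}) = card (faces E rot) - 1"
    using outer_face finite_darts unfolding faces_eq_orbits by simp
  then have "N * (card (faces E rot) - 1) \<le> card (orbit_of lifted_face ` ?I)"
    using card_orbits_lift_ge[OF perm_on_face_succ perm_on_lifted_face _ Diff_subset, of outer]
      funpow_face_succ_notin_outer[of _ 1] perm_on_in[OF perm_on_face_succ] lifted_face_internal
      internal_faces_eq by simp
  moreover have "D \<times> {..<N} = ?I \<union> ?OP" using outer_subset by blast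
  ultimately show ?thesis
    using card_orbits_Un[OF perm_on_lifted_face, of ?I ?OP] lifted_face_internal(1) lifted_face_outer
      outer_subset unfolding num_cycles_def by fastforce
qed

text \<open>The lifted rotation, reversal and face permutation have at least NV, NE and N(F - 1) + b
  cycles, where b < N counts the lifts of the outer face, while the genus inequality bounds the
  total by 2NE + 2b; with V - E + F = 2 this forces N \<le> b.\<close>
theorem twist_trivial: "\<not> twist_nontrivial L N s t (k + 1 - k0)"
proof
  assume twist: "twist_nontrivial L N s t (k + 1 - k0)"
  let ?DP = "D \<times> {..<N}"
  define b where "b = card (orbit_of lifted_face ` (outer \<times> {..<N}))"
  have "num_cycles lifted_rot ?DP + num_cycles lifted_swap ?DP + num_cycles lifted_face ?DP
      \<le> card ?DP + 2 * num_joint_orbits lifted_rot lifted_swap ?DP"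
    by (rule num_cycles_triple_le[OF perm_on_lifted_rot perm_on_lifted_swap])
  moreover have "card ?DP = N * (2 * card E)" using card_darts by (simp add: card_cartesian_product)
  moreover have "N * card V + N * (card (faces E rot) - 1) = N * card E + N"
  proof -
    have "card (faces E rot) > 0"
      using outer_face finite_darts unfolding faces_eq_orbits by (auto simp: card_gt_0_iff)
    then have "card V + (card (faces E rot) - 1) = card E + 1" using euler by linarith
    then show ?thesis by (metis add_mult_distrib2 mult.right_neutral)
  qed
  ultimately have "N \<le> b"
    using num_cycles_lifted_rot_ge num_cycles_lifted_swap_ge num_cycles_lifted_face_ge
      num_joint_orbits_lifted_le unfolding b_def by linarith
  then show False using card_lifted_outer_cycles_lt[OF twist] unfolding b_def by simp
qed

end

lemma (in near_regular_plane_map) triangle_rep_twist_trivial: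
  assumes "\<forall>f\<in>faces E rot - {outer}. face_length f = L" "0 < L" "triangle_rep k L N s t"
  shows "\<not> twist_nontrivial L N s t (k + 1 - k0)"
proof -
  interpret twisted_cover V E rot outer w k k0 L N s t
    using assms by unfold_locales
  show ?thesis by (rule twist_trivial)
qed

lemma (in near_regular_plane_map) exists_internal_length_ge3:
  assumes "\<forall>f\<in>faces E rot - {outer}. face_length f = L"
  obtains L' where "3 \<le> L'" "\<forall>f\<in>faces E rot - {outer}. face_length f = L'"
proof (cases "faces E rot - {outer} = {}")
  case True
  then show ?thesis using that[of 3] by blast
next
  case False
  then obtain d where d: "d \<in> D - outer" using internal_faces_eq by blast
  then have "3 \<le> face_length (orbit_of (face_succ rot) d)"
    using card_orbit_of_face_succ_ge3 degree_ge2 unfolding face_length_def by blast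
  moreover have "face_length (orbit_of (face_succ rot) d) = L" using assms internal_faces_eq d by blast
  ultimately show ?thesis using that assms by blast
qed

lemma small_triangle_groups:
  fixes k L :: nat
  assumes "k \<in> {3, 4, 5}" "3 \<le> L" "(k - 2) * L < 2 * k"
  shows "(k, L) \<in> {(3, 3), (3, 4), (3, 5), (4, 3), (5, 3)}"
proof -
  consider "k = 3" | "k = 4" | "k = 5" using assms(1) by blast
  then show ?thesis
  proof cases
    case 1
    then have "L < 6" using assms(3) by simp
    then have "L = 3 \<or> L = 4 \<or> L = 5" using assms(2) by presburger
    then show ?thesis using 1 by auto
  next
    case 2
    then have "L = 3" using assms(2,3) by simp
    then show ?thesis using 2 by simp
  next
    case 3
    then have "L = 3" using assms(2,3) by simp
    then show ?thesis using 3 by simp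
  qed
qed

theorem mainTheorem2:
  fixes k k0 :: nat
  assumes "k \<in> {3, 4, 5}" and "2 \<le> k0" and "k0 \<le> k - 1"
  shows "\<not> (\<exists>(V :: 'v set) E rot outer w.
            plane_graph V E rot outer \<and> two_connected V E \<and>
            w \<in> V \<and> vertex_on_face w outer \<and> degree E w = k0 \<and>
            (\<forall>v\<in>V - {w}. degree E v = k) \<and>
            (\<exists>L. \<forall>f\<in>faces E rot - {outer}. face_length f = L))"
proof (intro notI, elim exE conjE)
  fix V :: "'v set" and E rot outer w L
  assume plane: "plane_graph V E rot outer" and two_connected: "two_connected V E"
    and w: "w \<in> V" "vertex_on_face w outer" "degree E w = k0" "\<forall>v\<in>V - {w}. degree E v = k"
    and uniform: "\<forall>f\<in>faces E rot - {outer}. face_length f = L"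
  have "simple_graph V E" "rotation_system V E rot" "outer \<in> faces E rot"
    "int (card V) - int (card E) + int (card (faces E rot)) = 2"
    using plane unfolding plane_graph_def plane_embedding_def by simp_all
  moreover have "connected_on V E" using two_connected unfolding two_connected_def by simp
  moreover have "2 \<le> k0" "k0 < k" using assms by auto
  ultimately interpret near_regular_plane_map V E rot outer w k k0
    using w by unfold_locales simp_all
  obtain L' where L': "3 \<le> L'" "\<forall>f\<in>faces E rot - {outer}. face_length f = L'"
    using exists_internal_length_ge3[OF uniform] by blast
  have small: "(k, L') \<in> {(3, 3), (3, 4), (3, 5), (4, 3), (5, 3)}"
    using small_triangle_groups[OF assms(1) L'(1) face_length_bound[OF L'(2)]] .
  have twist_exp: "2 \<le> k + 1 - k0" "k + 1 - k0 < k" using k0_ge k0_less by auto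
  obtain N s t where rep: "triangle_rep k L' N s t" and twist: "twist_nontrivial L' N s t (k + 1 - k0)"
    using triangle_rep_twist_exists[OF small twist_exp] by blast
  have "0 < L'" using L'(1) by simp
  then show False using triangle_rep_twist_trivial[OF L'(2) _ rep] twist by blast
qed

end
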